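(* Let $L_n$ be the number of leaves of the $2$-$3$-tree (the $B$-tree of order $3$, i.e. $m=1$) obtained by inserting the keys $\pi(1),\dots,\pi(n)$ successively into an empty tree, where $\pi$ is a uniformly random permutation in $S_n$. Then for $n>11$, \[ \mathbb E(L_n)=\tfrac37(n+1),\qquad \mathbb V(L_n)=\tfrac{12}{637}(n+1), \] and \[ \frac{L_n-\mathbb E(L_n)}{\sqrt{\mathbb V(L_n)}}\xrightarrow{d} N(0,1)\quad (n\to\infty). \]
   Context: A $B$-tree of order $2m+1$ is a rooted plane search tree whose nodes contain pairwise distinct keys in increasing left-to-right order (a non-leaf node with $k$ keys has $k+1$ children), every non-root node has between $m$ and $2m$ keys, the root between $1$ and $2m$, and all leaves have equal depth. Insertion: place the new key in the appropriate leaf; whenever a node has $2m+1$ keys, split it, moving the median key up into the parent and forming two nodes from the $m$ smallest and the $m$ largest keys (creating a new one-key root if the root splits). For $m=1$ these are $2$-$3$-trees. *)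

theory Defs
  imports "HOL-Probability.Probability" "HOL-Combinatorics.Multiset_Permutations"
begin

text \<open>B-trees of order 2m+1 with natural-number keys.  A node carries its
  list of keys (increasing) and the list of its children; a leaf is a node
  with no children.\<close>

datatype btree = BNode "nat list" "btree list"

datatype ins_result = Normal btree | Split btree nat btree

text \<open>The recursive call is on the child
  at position i, where i is the number of keys smaller than x (children are
  mapped all at once only to make the recursion structural; only the i-th
  result is used).\<close>

fun ins :: "nat \<Rightarrow> nat \<Rightarrow> btree \<Rightarrow> ins_result" where
  "ins m x (BNode ks ts) =
     (if ts = [] then
        (let ks' = insort x ks in
         if length ks' \<le> 2 * m then Normal (BNode ks' [])
         else Split (BNode (take m ks') []) (ks' ! m) (BNode (drop (m + 1) ks') []))
      else
        (let i = length (filter (\<lambda>k. k < x) ks);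
             rs = map (ins m x) ts in
         case rs ! i of
           Normal t' \<Rightarrow> Normal (BNode ks (ts[i := t']))
         | Split l k r \<Rightarrow>
             (let ks' = take i ks @ k # drop i ks;
                  ts' = take i ts @ l # r # drop (i + 1) ts in
              if length ks' \<le> 2 * m then Normal (BNode ks' ts')
              else Split (BNode (take m ks') (take (m + 1) ts')) (ks' ! m)
                         (BNode (drop (m + 1) ks') (drop (m + 1) ts')))))"

definition binsert :: "nat \<Rightarrow> nat \<Rightarrow> btree \<Rightarrow> btree" where
  "binsert m x t = (case ins m x t of
                      Normal t' \<Rightarrow> t'
                    | Split l k r \<Rightarrow> BNode [k] [l, r])"

definition empty_btree :: btree where
  "empty_btree = BNode [] []"

definition build :: "nat \<Rightarrow> nat list \<Rightarrow> btree" where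
  "build m xs = fold (binsert m) xs empty_btree"

fun leaves :: "btree \<Rightarrow> nat" where
  "leaves (BNode ks ts) = (if ts = [] then 1 else sum_list (map leaves ts))"

definition L_dist :: "nat \<Rightarrow> real pmf" where
  "L_dist n = map_pmf (\<lambda>xs. real (leaves (build 1 xs)))
                (pmf_of_set (permutations_of_set {1..n}))"

end

theory Submission
  imports Defs "HOL-Probability.Random_Permutations" "HOL-Real_Asymp.Real_Asymp"
begin

text \<open>Insertion into a B-tree is tracked through the left-to-right list of its leaf sizes: a leaf with
  \<open>s\<close> keys offers \<open>s + 1\<close> gaps, and a new key falls into one of the \<open>n + 1\<close> gaps of a tree with \<open>n\<close> keys,
  according to its rank. For a random insertion order each gap is equally likely, whatever the tree.
  In a 2-3-tree with \<open>n \<ge> 1\<close> keys and \<open>L\<close> leaves, all leaves have one or two keys, and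
  the \<open>3 (n + 1 - 2 L)\<close> gaps in two-key leaves are those where insertion splits a leaf. So \<open>L\<^sub>n\<close> is a
  Markov chain whose increment is Bernoulli with parameter \<open>3 - 6 L / (n + 1)\<close>, linear in \<open>L\<close>:
  its first two moments satisfy linear recursions that are solved exactly.

  For the central limit theorem, the characteristic function of the standardised \<open>L\<^sub>n\<close> is deformed
  into \<open>exp (- t\<^sup>2 / 2)\<close> by replacing the steps of the chain one at a time, from the last one
  backwards, by Gaussian factors with the matching conditional variance. Each replacement costs a
  third-order Taylor error of order \<open>n^(-3/2)\<close> plus a term of order \<open>n^(-1) j^(-1/2)\<close> at step \<open>j\<close>
  coming from the fluctuation of the conditional variance; in total the error is of order \<open>n^(-1/2)\<close>.\<close>

fun interleave :: "'a list list \<Rightarrow> 'a list \<Rightarrow> 'a list" where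
  "interleave (a # as) (k # ks) = a @ k # interleave as ks"
| "interleave as [] = concat as"
| "interleave [] ks = []"

definition interleave_pre :: "'a list list \<Rightarrow> 'a list \<Rightarrow> 'a list" where
  "interleave_pre as ks = concat (map2 (\<lambda>a k. a @ [k]) as ks)"

definition interleave_post :: "'a list list \<Rightarrow> 'a list \<Rightarrow> 'a list" where
  "interleave_post as ks = (case ks of [] \<Rightarrow> [] | k # ks' \<Rightarrow> k # interleave as ks')"

lemma length_interleave:
  "length as = Suc (length ks) \<Longrightarrow> length (interleave as ks) = sum_list (map length as) + length ks"
  by (induction as ks rule: interleave.induct) (auto simp: length_concat)

lemma length_interleave_pre:
  "length as = length ks \<Longrightarrow> length (interleave_pre as ks) = sum_list (map length as) + length ks"
  by (induction as ks rule: list_induct2) (auto simp: interleave_pre_def)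

lemma interleave_pre_snoc:
  "length as = length ks \<Longrightarrow> interleave_pre (as @ [a]) (ks @ [k]) = interleave_pre as ks @ a @ [k]"
  by (simp add: interleave_pre_def)

lemma interleave_append:
  "length as = length ks \<Longrightarrow> interleave (as @ bs) (ks @ ls) = interleave_pre as ks @ interleave bs ls"
  by (induction as ks rule: list_induct2) (auto simp: interleave_pre_def)

lemma interleave_around:
  "length as = length ks \<Longrightarrow> length bs = length ls \<Longrightarrow>
   interleave (as @ c # bs) (ks @ ls) = interleave_pre as ks @ c @ interleave_post bs ls"
  using interleave_append[of as ks "[c]" "[]"]
  by (cases ls; cases bs) (auto simp: interleave_append interleave_post_def)

lemma interleave_split_at:
  "length as = Suc (length ks) \<Longrightarrow> j < length ks \<Longrightarrow>
   interleave as ks = interleave (take (Suc j) as) (take j ks) @ ks ! j #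
                      interleave (drop (Suc j) as) (drop (Suc j) ks)"
proof (induction j arbitrary: as ks)
  case 0
  then show ?case by (cases as; cases ks) auto
next
  case (Suc j)
  then show ?case by (cases as; cases ks) auto
qed

lemma set_interleave_sep:
  "length ks \<le> length as \<Longrightarrow> set ks \<subseteq> set (interleave as ks)"
  by (induction as ks rule: interleave.induct) auto

lemma sorted_interleave_sep:
  "length ks \<le> length as \<Longrightarrow> sorted_wrt (<) (interleave as ks) \<Longrightarrow> sorted_wrt (<) ks"
proof (induction as ks rule: interleave.induct)
  case (1 a as k ks)
  then show ?case using set_interleave_sep[of ks as] by (auto simp: sorted_wrt_append)
qed auto

lemma insort_append_left:
  "\<forall>y\<in>set xs. y < x \<Longrightarrow> insort x (xs @ ys) = xs @ insort x ys"
  by (induction xs) auto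

lemma insort_append_right:
  "\<forall>y\<in>set ys. x < y \<Longrightarrow> insort x (xs @ ys) = insort x xs @ ys"
proof (induction xs)
  case Nil
  then show ?case by (cases ys) auto
qed auto

definition count_less :: "'a::linorder \<Rightarrow> 'a list \<Rightarrow> nat" where
  "count_less x xs = length (filter (\<lambda>y. y < x) xs)"

lemma count_less_le_length: "count_less x xs \<le> length xs"
  by (simp add: count_less_def)

lemma nth_less_iff_lt_count_less:
  assumes "sorted_wrt (<) xs" "x \<notin> set xs" "j < length xs"
  shows "xs ! j < x \<longleftrightarrow> j < count_less x xs"
  using assms
proof (induction xs arbitrary: j)
  case (Cons y xs)
  show ?case
  proof (cases "y < x")
    case True
    then show ?thesis using Cons by (cases j) (auto simp: count_less_def dest: nth_mem)
  next
    case False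
    then have "x < y" using Cons.prems(2) by auto
    then have gt: "\<forall>z\<in>set xs. x < z" using Cons.prems(1) by auto
    then have "filter (\<lambda>z. z < x) xs = []" by (auto simp: filter_empty_conv)
    then show ?thesis using False gt Cons.prems(3)
      by (cases j) (fastforce simp: count_less_def dest: nth_mem)+
  qed
qed simp

lemma count_less_append_sep:
  "\<forall>y\<in>set xs. y < x \<Longrightarrow> \<forall>y\<in>set ys. x < y \<Longrightarrow> count_less x (xs @ zs @ ys) = length xs + count_less x zs"
  by (auto simp: count_less_def filter_empty_conv)

subsection \<open>B-trees as sequences of keys and of leaf sizes\<close>

fun key_list :: "btree \<Rightarrow> nat list" where
  "key_list (BNode ks ts) = (if ts = [] then ks else interleave (map key_list ts) ks)"

fun leafsizes :: "btree \<Rightarrow> nat list" where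
  "leafsizes (BNode ks ts) = (if ts = [] then [length ks] else concat (map leafsizes ts))"

fun wf_btree :: "btree \<Rightarrow> bool" where
  "wf_btree (BNode ks ts) = (ts = [] \<or> (length ts = Suc (length ks) \<and> (\<forall>t\<in>set ts. wf_btree t)))"

fun key_list_res :: "ins_result \<Rightarrow> nat list" where
  "key_list_res (Normal t) = key_list t"
| "key_list_res (Split l k r) = key_list l @ k # key_list r"

fun leafsizes_res :: "ins_result \<Rightarrow> nat list" where
  "leafsizes_res (Normal t) = leafsizes t"
| "leafsizes_res (Split l k r) = leafsizes l @ leafsizes r"

fun wf_res :: "ins_result \<Rightarrow> bool" where
  "wf_res (Normal t) = wf_btree t"
| "wf_res (Split l k r) = (wf_btree l \<and> wf_btree r)"

lemma leaves_eq_length_leafsizes: "leaves t = length (leafsizes t)"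
proof (induction t)
  case (BNode ks ts)
  then show ?case by (auto simp: length_concat o_def intro!: arg_cong[where f = sum_list] map_cong)
qed

definition mk_node :: "nat \<Rightarrow> nat list \<Rightarrow> btree list \<Rightarrow> ins_result" where
  "mk_node m ks ts =
     (if length ks \<le> 2 * m then Normal (BNode ks ts)
      else Split (BNode (take m ks) (take (Suc m) ts)) (ks ! m) (BNode (drop (Suc m) ks) (drop (Suc m) ts)))"

definition replace_child :: "nat \<Rightarrow> nat list \<Rightarrow> btree list \<Rightarrow> nat \<Rightarrow> ins_result \<Rightarrow> ins_result" where
  "replace_child m ks ts i r = (case r of
      Normal t \<Rightarrow> Normal (BNode ks (ts[i := t]))
    | Split l k r \<Rightarrow> mk_node m (take i ks @ k # drop i ks) (take i ts @ l # r # drop (Suc i) ts))"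

lemma ins_Leaf: "ins m x (BNode ks []) = mk_node m (insort x ks) []"
  by (simp add: mk_node_def Let_def)

lemma ins_Node:
  assumes "length ts = Suc (length ks)"
  shows "ins m x (BNode ks ts) = replace_child m ks ts (count_less x ks) (ins m x (ts ! count_less x ks))"
proof -
  have "count_less x ks < length ts" using assms count_less_le_length[of x ks] by simp
  then show ?thesis using assms
    by (auto simp: replace_child_def mk_node_def count_less_def Let_def split: ins_result.split)
qed

lemma mk_node_correct:
  assumes "wf_btree (BNode ks ts)"
  shows "wf_res (mk_node m ks ts) \<and> key_list_res (mk_node m ks ts) = key_list (BNode ks ts) \<and>
         (ts \<noteq> [] \<longrightarrow> leafsizes_res (mk_node m ks ts) = leafsizes (BNode ks ts))"
proof (cases "length ks \<le> 2 * m")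
  case True
  then show ?thesis using assms by (simp add: mk_node_def)
next
  case False
  then have m: "m < length ks" by simp
  show ?thesis
  proof (cases "ts = []")
    case True
    then show ?thesis using False m by (simp add: mk_node_def id_take_nth_drop[symmetric])
  next
    case False
    with assms have l: "length ts = Suc (length ks)" and w: "\<forall>t\<in>set ts. wf_btree t" by auto
    have "take (Suc m) ts \<noteq> []" "drop (Suc m) ts \<noteq> []" using l m by (cases ts; simp)+
    moreover have "\<forall>t\<in>set (take (Suc m) ts). wf_btree t" "\<forall>t\<in>set (drop (Suc m) ts). wf_btree t"
      using w by (meson in_set_takeD in_set_dropD)+
    moreover have "interleave (map key_list ts) ks =
        interleave (take (Suc m) (map key_list ts)) (take m ks) @ ks ! m #
        interleave (drop (Suc m) (map key_list ts)) (drop (Suc m) ks)"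
      using interleave_split_at[of "map key_list ts" ks m] l m by simp
    moreover have "concat (map leafsizes ts) =
        concat (map leafsizes (take (Suc m) ts)) @ concat (map leafsizes (drop (Suc m) ts))"
      by (metis append_take_drop_id concat_append map_append)
    ultimately show ?thesis using \<open>\<not> length ks \<le> 2 * m\<close> l m
      by (simp add: mk_node_def take_map drop_map min_def)
  qed
qed

lemma leafsizes_mk_leaf:
  "leafsizes_res (mk_node m ks []) =
     (if length ks \<le> 2 * m then [length ks] else [m, length ks - Suc m])"
  by (simp add: mk_node_def)

lemma replace_child_correct:
  assumes l: "length ts = Suc (length ks)" and w: "\<forall>t\<in>set ts. wf_btree t"
    and i: "i \<le> length ks" and r: "wf_res r"
  defines "P \<equiv> interleave_pre (map key_list (take i ts)) (take i ks)"
    and "S \<equiv> interleave_post (map key_list (drop (Suc i) ts)) (drop i ks)"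
  shows "wf_res (replace_child m ks ts i r) \<and>
         key_list_res (replace_child m ks ts i r) = P @ key_list_res r @ S \<and>
         leafsizes_res (replace_child m ks ts i r) =
           concat (map leafsizes (take i ts)) @ leafsizes_res r @ concat (map leafsizes (drop (Suc i) ts))"
proof -
  have lP: "length (map key_list (take i ts)) = length (take i ks)" using i l by simp
  have lS: "length (map key_list (drop (Suc i) ts)) = length (drop i ks)" using l by simp
  have ilt: "i < length ts" using i l by simp
  show ?thesis
  proof (cases r)
    case (Normal t)
    have ts': "ts[i := t] = take i ts @ t # drop (Suc i) ts" using ilt by (simp add: upd_conv_take_nth_drop)
    have "ts[i := t] \<noteq> []" using ilt by (simp add: ts')
    then show ?thesis using Normal r l w i ts' interleave_around[OF lP lS, of "key_list t"]
      by (auto simp: replace_child_def P_def S_def dest: in_set_takeD in_set_dropD)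
  next
    case (Split lt k rt)
    define ks' where "ks' = take i ks @ k # drop i ks"
    define ts' where "ts' = take i ts @ lt # rt # drop (Suc i) ts"
    have l': "length ts' = Suc (length ks')" using l ilt i by (simp add: ts'_def ks'_def)
    have w': "\<forall>t\<in>set ts'. wf_btree t" using w r Split by (auto simp: ts'_def dest: in_set_takeD in_set_dropD)
    have "interleave (map key_list ts') ks' = P @ key_list lt @ k # key_list rt @ S"
      using interleave_around[of "map key_list (take i ts @ [lt])" "take i ks @ [k]" "map key_list (drop (Suc i) ts)"
          "drop i ks" "key_list rt"] lP lS interleave_pre_snoc[OF lP]
      by (simp add: ts'_def ks'_def P_def S_def)
    then have "key_list (BNode ks' ts') = P @ key_list_res r @ S" using Split by (simp add: ts'_def)
    moreover have "leafsizes (BNode ks' ts') =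
        concat (map leafsizes (take i ts)) @ leafsizes_res r @ concat (map leafsizes (drop (Suc i) ts))"
      using Split by (simp add: ts'_def)
    moreover have "ts' \<noteq> []" by (simp add: ts'_def)
    ultimately show ?thesis using mk_node_correct[of ks' ts' m] l' w' Split
      by (simp add: replace_child_def ks'_def ts'_def)
  qed
qed

lemma inorder_around_child:
  assumes l: "length ts = Suc (length ks)" and i: "i \<le> length ks"
  shows "key_list (BNode ks ts) = interleave_pre (map key_list (take i ts)) (take i ks) @ key_list (ts ! i) @
                                 interleave_post (map key_list (drop (Suc i) ts)) (drop i ks)"
proof -
  have "ts = take i ts @ ts ! i # drop (Suc i) ts" using i l by (simp add: id_take_nth_drop)
  then have "map key_list ts = map key_list (take i ts) @ key_list (ts ! i) # map key_list (drop (Suc i) ts)"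
    by (metis list.simps(9) map_append)
  moreover have "ts \<noteq> []" using l by auto
  ultimately show ?thesis
    using interleave_around[of "map key_list (take i ts)" "take i ks" "map key_list (drop (Suc i) ts)" "drop i ks"] i l
    by simp
qed

subsection \<open>Gaps\<close>

text \<open>\<open>leaf_gaps\<close> labels every gap, from left to right, with the size of its leaf, and
  \<open>ins_gap m ls r\<close> is the leaf-size list after a key has been put into gap \<open>r\<close>.\<close>

definition leaf_gaps :: "nat list \<Rightarrow> nat list" where
  "leaf_gaps ls = concat (map (\<lambda>s. replicate (Suc s) s) ls)"

fun ins_gap :: "nat \<Rightarrow> nat list \<Rightarrow> nat \<Rightarrow> nat list" where
  "ins_gap m [] r = []"
| "ins_gap m (s # ls) r =
     (if r \<le> s then (if s < 2 * m then Suc s # ls else m # (s - m) # ls)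
      else s # ins_gap m ls (r - Suc s))"

lemma leaf_gaps_Nil [simp]: "leaf_gaps [] = []"
  by (simp add: leaf_gaps_def)

lemma leaf_gaps_Cons: "leaf_gaps (s # ls) = replicate (Suc s) s @ leaf_gaps ls"
  by (simp add: leaf_gaps_def)

lemma leaf_gaps_append [simp]: "leaf_gaps (ls @ ls') = leaf_gaps ls @ leaf_gaps ls'"
  by (simp add: leaf_gaps_def)

lemma length_leaf_gaps: "length (leaf_gaps ls) = sum_list (map Suc ls)"
  by (induction ls) (auto simp: leaf_gaps_def)

lemma length_leaf_gaps_Cons [simp]: "length (leaf_gaps (s # ls)) = Suc s + length (leaf_gaps ls)"
  by (simp add: leaf_gaps_def)

lemma length_leaf_gaps_concat:
  "length (leaf_gaps (concat lss)) = (\<Sum>ls\<leftarrow>lss. length (leaf_gaps ls))"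
  by (induction lss) (auto simp: leaf_gaps_def)

lemma nth_leaf_gaps_Cons:
  "leaf_gaps (s # ls) ! r = (if r \<le> s then s else leaf_gaps ls ! (r - Suc s))"
  by (auto simp: leaf_gaps_Cons nth_append simp del: replicate_Suc)

lemma length_leaf_gaps_leafsizes:
  "wf_btree t \<Longrightarrow> length (leaf_gaps (leafsizes t)) = Suc (length (key_list t))"
proof (induction t)
  case (BNode ks ts)
  show ?case
  proof (cases "ts = []")
    case False
    with BNode.prems have l: "length ts = Suc (length ks)" and w: "\<forall>t\<in>set ts. wf_btree t" by auto
    have "length (leaf_gaps (leafsizes (BNode ks ts))) = (\<Sum>t\<leftarrow>ts. Suc (length (key_list t)))"
      using False w BNode.IH by (simp add: length_leaf_gaps_concat o_def cong: map_cong)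
    also have "\<dots> = sum_list (map (\<lambda>t. length (key_list t)) ts) + length ts"
      by (induction ts) auto
    finally show ?thesis using False l by (simp add: length_interleave o_def)
  qed (simp add: leaf_gaps_def)
qed

lemma ins_gap_append_left:
  "r < length (leaf_gaps ls) \<Longrightarrow> ins_gap m (ls @ ls') r = ins_gap m ls r @ ls'"
  by (induction m ls r rule: ins_gap.induct) (auto simp: leaf_gaps_Cons)

lemma ins_gap_append_right: "ins_gap m (ls @ ls') (length (leaf_gaps ls) + r) = ls @ ins_gap m ls' r"
  by (induction ls) (auto simp: leaf_gaps_Cons)

lemma length_ins_gap:
  "r < length (leaf_gaps ls) \<Longrightarrow> length (ins_gap m ls r) = length ls + (if 2 * m \<le> leaf_gaps ls ! r then 1 else 0)"
  by (induction m ls r rule: ins_gap.induct) (auto simp: nth_leaf_gaps_Cons)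

lemma sum_ins_gap:
  "r < length (leaf_gaps ls) \<Longrightarrow> sum_list (map Suc (ins_gap m ls r)) = Suc (sum_list (map Suc ls))"
  by (induction m ls r rule: ins_gap.induct) (auto simp: leaf_gaps_Cons)

lemma ins_gap_sizes:
  "\<forall>s\<in>set ls. s = 1 \<or> s = 2 \<Longrightarrow> \<forall>s\<in>set (ins_gap 1 ls r). s = 1 \<or> s = 2"
  by (induction "1::nat" ls r rule: ins_gap.induct) auto

lemma count_full_gaps: "\<forall>s\<in>set ls. s = 1 \<or> s = 2 \<Longrightarrow>
  length (filter (\<lambda>s. 2 \<le> s) (leaf_gaps ls)) + 6 * length ls = 3 * sum_list (map Suc ls)"
  by (induction ls) (auto simp: leaf_gaps_Cons)

lemma keys_around_child_sep:
  assumes l: "length ts = Suc (length ks)"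
    and sorted: "sorted_wrt (<) (key_list (BNode ks ts))" and x: "x \<notin> set (key_list (BNode ks ts))"
  defines "i \<equiv> count_less x ks"
  defines "P \<equiv> interleave_pre (map key_list (take i ts)) (take i ks)"
    and "S \<equiv> interleave_post (map key_list (drop (Suc i) ts)) (drop i ks)"
  shows "(\<forall>y\<in>set P. y < x) \<and> (\<forall>y\<in>set S. x < y)"
proof -
  have i: "i \<le> length ks" by (simp add: i_def count_less_le_length)
  have ne: "ts \<noteq> []" using l by auto
  have sks: "sorted_wrt (<) ks" and xks: "x \<notin> set ks"
    using sorted_interleave_sep[of ks "map key_list ts"] set_interleave_sep[of ks "map key_list ts"] sorted x l ne
    by auto
  have "sorted_wrt (<) (P @ key_list (ts ! i) @ S)"
    using sorted inorder_around_child[OF l i] by (simp add: P_def S_def)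
  then have sP: "sorted_wrt (<) P" and sS: "sorted_wrt (<) S" by (simp_all add: sorted_wrt_append)
  have "\<forall>y\<in>set P. y < x"
  proof (cases i)
    case (Suc j)
    have "P = interleave_pre (map key_list (take j ts)) (take j ks) @ key_list (ts ! j) @ [ks ! j]"
      using Suc i l interleave_pre_snoc[of "map key_list (take j ts)" "take j ks"]
      by (simp add: P_def take_Suc_conv_app_nth)
    then have "\<forall>y\<in>set P. y \<le> ks ! j" using sP by (auto simp: sorted_wrt_append)
    moreover have "ks ! j < x" using nth_less_iff_lt_count_less[OF sks xks, of j] Suc i by (simp add: i_def)
    ultimately show ?thesis by fastforce
  qed (simp add: P_def interleave_pre_def)
  moreover have "\<forall>y\<in>set S. x < y"
  proof (cases "i < length ks")
    case True
    then have "S = ks ! i # interleave (map key_list (drop (Suc i) ts)) (drop (Suc i) ks)"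
      by (simp add: S_def interleave_post_def Cons_nth_drop_Suc[symmetric])
    then have "\<forall>y\<in>set S. ks ! i \<le> y" using sS by auto
    moreover have "x < ks ! i"
    proof -
      have "ks ! i \<noteq> x" using nth_mem[OF True] xks by auto
      then show ?thesis using nth_less_iff_lt_count_less[OF sks xks True] by (simp add: i_def)
    qed
    ultimately show ?thesis by fastforce
  qed (use i in \<open>simp add: S_def interleave_post_def\<close>)
  ultimately show ?thesis ..
qed

lemma ins_correct:
  assumes "wf_btree t" "sorted_wrt (<) (key_list t)" "x \<notin> set (key_list t)"
  shows "wf_res (ins m x t) \<and> key_list_res (ins m x t) = insort x (key_list t) \<and>
         leafsizes_res (ins m x t) = ins_gap m (leafsizes t) (count_less x (key_list t))"
  using assms
proof (induction t)
  case (BNode ks ts)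
  show ?case
  proof (cases "ts = []")
    case True
    have "count_less x ks \<le> length ks" by (rule count_less_le_length)
    then show ?thesis using True mk_node_correct[of "insort x ks" "[]" m]
      by (simp add: ins_Leaf leafsizes_mk_leaf length_insort del: ins.simps)
  next
    case False
    with BNode.prems(1) have l: "length ts = Suc (length ks)" and w: "\<forall>t\<in>set ts. wf_btree t" by auto
    define i where "i = count_less x ks"
    define P where "P = interleave_pre (map key_list (take i ts)) (take i ks)"
    define S where "S = interleave_post (map key_list (drop (Suc i) ts)) (drop i ks)"
    define t where "t = ts ! i"
    have i: "i \<le> length ks" by (simp add: i_def count_less_le_length)
    then have t: "t \<in> set ts" using l by (simp add: t_def)
    have keys: "key_list (BNode ks ts) = P @ key_list t @ S"
      using inorder_around_child[OF l i] by (simp add: P_def S_def t_def)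
    have sep: "\<forall>y\<in>set P. y < x" "\<forall>y\<in>set S. x < y"
      using keys_around_child_sep[OF l BNode.prems(2,3)] by (simp_all add: P_def S_def i_def)
    have IH: "wf_res (ins m x t) \<and> key_list_res (ins m x t) = insort x (key_list t) \<and>
        leafsizes_res (ins m x t) = ins_gap m (leafsizes t) (count_less x (key_list t))"
      using BNode.IH[OF t] w t BNode.prems(2,3) keys by (simp add: sorted_wrt_append)
    have res: "ins m x (BNode ks ts) = replace_child m ks ts i (ins m x t)"
      using ins_Node[OF l] by (simp add: i_def t_def)
    have "insort x (key_list (BNode ks ts)) = P @ insort x (key_list t) @ S"
      using keys sep by (simp add: insort_append_left insort_append_right)
    moreover have count_less: "count_less x (key_list (BNode ks ts)) = length P + count_less x (key_list t)"
      using keys sep by (simp add: count_less_append_sep)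
    moreover have "ins_gap m (leafsizes (BNode ks ts)) (length P + count_less x (key_list t)) =
        concat (map leafsizes (take i ts)) @ ins_gap m (leafsizes t) (count_less x (key_list t)) @
        concat (map leafsizes (drop (Suc i) ts))"
    proof -
      have "ts = take i ts @ t # drop (Suc i) ts" using i l by (simp add: t_def id_take_nth_drop)
      then have ls: "leafsizes (BNode ks ts) =
          concat (map leafsizes (take i ts)) @ leafsizes t @ concat (map leafsizes (drop (Suc i) ts))"
        using False by (metis concat.simps(2) concat_append leafsizes.simps list.simps(9) map_append)
      have "length (leaf_gaps (concat (map leafsizes (take i ts)))) = (\<Sum>u\<leftarrow>take i ts. Suc (length (key_list u)))"
        unfolding length_leaf_gaps_concat map_map o_def
        using w length_leaf_gaps_leafsizes by (intro arg_cong[where f = sum_list] map_cong) (auto dest: in_set_takeD)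
      also have "\<dots> = (\<Sum>u\<leftarrow>take i ts. length (key_list u)) + length (take i ts)"
        by (simp add: sum_list_Suc)
      also have "\<dots> = length P"
        using i l by (simp add: P_def length_interleave_pre o_def)
      finally have P: "length P = length (leaf_gaps (concat (map leafsizes (take i ts))))" ..
      have r: "count_less x (key_list t) < length (leaf_gaps (leafsizes t))"
        using length_leaf_gaps_leafsizes[of t] w t count_less_le_length[of x "key_list t"] by simp
      show ?thesis unfolding ls P ins_gap_append_right ins_gap_append_left[OF r] ..
    qed
    ultimately show ?thesis
      using res IH replace_child_correct[OF l w i, of "ins m x t" m] by (simp add: P_def S_def)
  qed
qed

lemma binsert_correct:
  assumes "wf_btree t" "sorted_wrt (<) (key_list t)" "x \<notin> set (key_list t)"
  shows "wf_btree (binsert m x t) \<and> key_list (binsert m x t) = insort x (key_list t) \<and>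
         leafsizes (binsert m x t) = ins_gap m (leafsizes t) (count_less x (key_list t))"
  using ins_correct[OF assms, of m] by (auto simp: binsert_def split: ins_result.splits)

lemma build_snoc: "build m (xs @ [x]) = binsert m x (build m xs)"
  by (simp add: build_def)

lemma build_invariant:
  "distinct xs \<Longrightarrow> wf_btree (build m xs) \<and> sorted_wrt (<) (key_list (build m xs)) \<and> set (key_list (build m xs)) = set xs"
proof (induction xs rule: rev_induct)
  case Nil
  then show ?case by (simp add: build_def empty_btree_def)
next
  case (snoc x xs)
  then have IH: "wf_btree (build m xs)" "sorted_wrt (<) (key_list (build m xs))" "set (key_list (build m xs)) = set xs"
    and x: "x \<notin> set (key_list (build m xs))" by auto
  have "sorted_wrt (<) (insort x (key_list (build m xs)))"
    using IH(2) x by (simp add: strict_sorted_iff sorted_insort distinct_insort)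
  then show ?case using binsert_correct[OF IH(1,2) x, of m] IH by (simp add: build_snoc set_insort_key)
qed

lemma leafsizes_build_snoc:
  assumes "distinct (xs @ [x])"
  shows "leafsizes (build m (xs @ [x])) = ins_gap m (leafsizes (build m xs)) (card {y\<in>set xs. y < x})"
proof -
  have I: "wf_btree (build m xs)" "sorted_wrt (<) (key_list (build m xs))" "set (key_list (build m xs)) = set xs"
    using build_invariant[of xs m] assms by auto
  then have x: "x \<notin> set (key_list (build m xs))" using assms by simp
  have "count_less x (key_list (build m xs)) = card {y\<in>set xs. y < x}"
  proof -
    have "{y\<in>set xs. y < x} = {y. y < x} \<inter> set (key_list (build m xs))" using I by auto
    then show ?thesis using I(2) by (simp add: count_less_def distinct_length_filter strict_sorted_iff)
  qed
  then show ?thesis using binsert_correct[OF I(1,2) x, of m] by (simp add: build_snoc)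
qed

subsection \<open>Random insertion orders\<close>

lemma random_permutation_snoc:
  assumes "finite B" "B \<noteq> {}"
  shows "map_pmf f (pmf_of_set (permutations_of_set B)) =
         pmf_of_set B \<bind> (\<lambda>x. map_pmf (\<lambda>xs. f (xs @ [x])) (pmf_of_set (permutations_of_set (B - {x}))))"
proof -
  have rev: "map_pmf rev (pmf_of_set (permutations_of_set A)) = pmf_of_set (permutations_of_set A)"
    if "finite A" for A :: "'a set"
    using that by (subst map_pmf_of_set_inj) (auto simp: inj_on_def)
  have "map_pmf f (pmf_of_set (permutations_of_set B)) = map_pmf (f \<circ> rev) (pmf_of_set (permutations_of_set B))"
    using rev[OF assms(1)] by (metis pmf.map_comp)
  also have "\<dots> = pmf_of_set B \<bind> (\<lambda>x. map_pmf (\<lambda>xs. f (rev xs @ [x])) (pmf_of_set (permutations_of_set (B - {x}))))"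
    using assms by (simp add: random_permutation_of_set map_bind_pmf map_pmf_def[symmetric] pmf.map_comp o_def)
  also have "\<dots> = pmf_of_set B \<bind> (\<lambda>x. map_pmf (\<lambda>xs. f (xs @ [x])) (pmf_of_set (permutations_of_set (B - {x}))))"
  proof (intro bind_pmf_cong refl)
    fix x
    have "map_pmf (\<lambda>xs. f (rev xs @ [x])) (pmf_of_set (permutations_of_set (B - {x}))) =
          map_pmf (\<lambda>xs. f (xs @ [x])) (map_pmf rev (pmf_of_set (permutations_of_set (B - {x}))))"
      by (simp add: pmf.map_comp o_def)
    then show "map_pmf (\<lambda>xs. f (rev xs @ [x])) (pmf_of_set (permutations_of_set (B - {x}))) =
          map_pmf (\<lambda>xs. f (xs @ [x])) (pmf_of_set (permutations_of_set (B - {x})))"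
      using rev[of "B - {x}"] assms(1) by simp
  qed
  finally show ?thesis .
qed

lemma map_pmf_card_less_pmf_of_set:
  fixes B :: "'a::linorder set"
  assumes "finite B" "B \<noteq> {}"
  shows "map_pmf (\<lambda>x. card {y\<in>B. y < x}) (pmf_of_set B) = pmf_of_set {..<card B}"
proof -
  let ?c = "\<lambda>x. card {y\<in>B. y < x}"
  have mono: "?c x < ?c z" if "x \<in> B" "z \<in> B" "x < z" for x z
  proof -
    have "{y\<in>B. y < x} \<subset> {y\<in>B. y < z}" using that by auto
    then show ?thesis using assms by (intro psubset_card_mono) auto
  qed
  have inj: "inj_on ?c B"
    by (metis (no_types, lifting) inj_onI linorder_neqE mono order_less_irrefl)
  have "?c ` B \<subseteq> {..<card B}"
  proof
    fix r assume "r \<in> ?c ` B"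
    then obtain x where x: "x \<in> B" "r = ?c x" by auto
    have "{y\<in>B. y < x} \<subset> B" using x by auto
    then show "r \<in> {..<card B}" using x assms by (simp add: psubset_card_mono)
  qed
  moreover have "card (?c ` B) = card B" using inj by (simp add: card_image)
  ultimately have "?c ` B = {..<card B}" by (intro card_subset_eq) auto
  then show ?thesis using inj assms by (simp add: map_pmf_of_set_inj)
qed

lemma map_pmf_pred_pmf_of_set:
  assumes "finite S" "S \<noteq> {}"
  shows "map_pmf P (pmf_of_set S) = bernoulli_pmf (real (card {x\<in>S. P x}) / real (card S))"
proof (rule pmf_eqI)
  fix b :: bool
  have cS: "card S > 0" using assms by (simp add: card_gt_0_iff)
  have le: "card {x\<in>S. P x} \<le> card S" using assms by (intro card_mono) auto
  have part: "card {x\<in>S. P x} + card {x\<in>S. \<not> P x} = card S"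
  proof -
    have "card ({x\<in>S. P x} \<union> {x\<in>S. \<not> P x}) = card {x\<in>S. P x} + card {x\<in>S. \<not> P x}"
      using assms by (intro card_Un_disjoint) auto
    moreover have "{x\<in>S. P x} \<union> {x\<in>S. \<not> P x} = S" by auto
    ultimately show ?thesis by simp
  qed
  have p01: "0 \<le> real (card {x\<in>S. P x}) / real (card S)" "real (card {x\<in>S. P x}) / real (card S) \<le> 1"
    using le cS by (auto simp: divide_le_eq)
  show "pmf (map_pmf P (pmf_of_set S)) b = pmf (bernoulli_pmf (real (card {x\<in>S. P x}) / real (card S))) b"
  proof (cases b)
    case True
    have "P -` {True} = {x. P x}" by auto
    then show ?thesis using True assms p01 by (simp add: pmf_map measure_pmf_of_set Int_def conj_commute)
  next
    case False
    have "P -` {False} = {x. \<not> P x}" by auto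
    moreover have "real (card {x\<in>S. \<not> P x}) / real (card S) = 1 - real (card {x\<in>S. P x}) / real (card S)"
      using part cS by (simp add: field_simps flip: of_nat_add)
    ultimately show ?thesis using False assms p01 by (simp add: pmf_map measure_pmf_of_set Int_def conj_commute)
  qed
qed

primrec leafsizes_pmf :: "nat \<Rightarrow> nat list pmf" where
  leafsizes_pmf_0: "leafsizes_pmf 0 = return_pmf [0]"
| leafsizes_pmf_Suc: "leafsizes_pmf (Suc n) = leafsizes_pmf n \<bind> (\<lambda>ls. map_pmf (ins_gap 1 ls) (pmf_of_set {..n}))"

lemma leafsizes_build_random_permutation:
  "finite B \<Longrightarrow> map_pmf (\<lambda>xs. leafsizes (build 1 xs)) (pmf_of_set (permutations_of_set B)) = leafsizes_pmf (card B)"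
proof (induction "card B" arbitrary: B)
  case 0
  then show ?case by (simp add: pmf_of_set_singleton build_def empty_btree_def)
next
  case (Suc n)
  let ?F = "\<lambda>xs. leafsizes (build 1 xs)"
  let ?c = "\<lambda>x. card {y\<in>B. y < x}"
  have B: "finite B" "B \<noteq> {}" using Suc by auto
  have "map_pmf (\<lambda>xs. ?F (xs @ [x])) (pmf_of_set (permutations_of_set (B - {x}))) =
        map_pmf (\<lambda>ls. ins_gap 1 ls (?c x)) (leafsizes_pmf n)" if x: "x \<in> B" for x
  proof -
    have "?F (xs @ [x]) = ins_gap 1 (?F xs) (?c x)" if "xs \<in> permutations_of_set (B - {x})" for xs
    proof -
      have "set xs = B - {x}" "distinct xs" using that by (auto dest: permutations_of_setD)
      moreover have "{y \<in> set xs. y < x} = {y\<in>B. y < x}" using calculation by auto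
      ultimately show ?thesis using leafsizes_build_snoc[of xs x 1] by simp
    qed
    then have "map_pmf (\<lambda>xs. ?F (xs @ [x])) (pmf_of_set (permutations_of_set (B - {x}))) =
        map_pmf (\<lambda>ls. ins_gap 1 ls (?c x)) (map_pmf ?F (pmf_of_set (permutations_of_set (B - {x}))))"
      using B by (auto simp: pmf.map_comp o_def intro!: map_pmf_cong)
    also have "map_pmf ?F (pmf_of_set (permutations_of_set (B - {x}))) = leafsizes_pmf n"
      using Suc.hyps(1)[of "B - {x}"] Suc.hyps(2)[symmetric] B x by simp
    finally show ?thesis .
  qed
  then have "map_pmf ?F (pmf_of_set (permutations_of_set B)) =
      pmf_of_set B \<bind> (\<lambda>x. map_pmf (\<lambda>ls. ins_gap 1 ls (?c x)) (leafsizes_pmf n))"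
    using B by (simp add: random_permutation_snoc) (intro bind_pmf_cong refl, simp)
  also have "\<dots> = leafsizes_pmf n \<bind> (\<lambda>ls. map_pmf (ins_gap 1 ls) (map_pmf ?c (pmf_of_set B)))"
    unfolding map_pmf_def by (subst bind_commute_pmf) (simp add: bind_assoc_pmf bind_return_pmf)
  also have "\<dots> = leafsizes_pmf (card B)"
    using map_pmf_card_less_pmf_of_set[OF B] Suc.hyps(2)[symmetric] by (simp add: lessThan_Suc_atMost)
  finally show ?case .
qed

lemma leafsizes_pmf_support:
  "ls \<in> set_pmf (leafsizes_pmf n) \<Longrightarrow> sum_list (map Suc ls) = Suc n \<and> (n = 0 \<longrightarrow> ls = [0]) \<and>
   (0 < n \<longrightarrow> (\<forall>s\<in>set ls. s = 1 \<or> s = 2))"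
proof (induction n arbitrary: ls)
  case 0
  then show ?case by (simp add: leafsizes_pmf_0)
next
  case (Suc n)
  then obtain ls0 r where ls0: "ls0 \<in> set_pmf (leafsizes_pmf n)" and r: "r \<le> n" and ls: "ls = ins_gap 1 ls0 r"
    by (auto simp: leafsizes_pmf_Suc)
  note I = Suc.IH[OF ls0]
  have rl: "r < length (leaf_gaps ls0)" using I r by (simp add: length_leaf_gaps)
  have s: "sum_list (map Suc ls) = Suc (Suc n)" using sum_ins_gap[OF rl] I ls by simp
  have "\<forall>s\<in>set ls. s = 1 \<or> s = 2"
  proof (cases n)
    case 0
    then show ?thesis using I r ls by simp
  next
    case (Suc n')
    then show ?thesis using I ls ins_gap_sizes by auto
  qed
  then show ?case using s by simp
qed

lemma card_full_gaps: "ls \<in> set_pmf (leafsizes_pmf n) \<Longrightarrow>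
  card {r\<in>{..n}. 2 \<le> leaf_gaps ls ! r} = 3 * (Suc n - 2 * length ls)"
proof -
  assume a: "ls \<in> set_pmf (leafsizes_pmf n)"
  note I = leafsizes_pmf_support[OF a]
  have "{r\<in>{..n}. 2 \<le> leaf_gaps ls ! r} = {r. r < length (leaf_gaps ls) \<and> 2 \<le> leaf_gaps ls ! r}"
    using I by (auto simp: length_leaf_gaps)
  then have "card {r\<in>{..n}. 2 \<le> leaf_gaps ls ! r} = length (filter (\<lambda>s. 2 \<le> s) (leaf_gaps ls))"
    by (simp add: length_filter_conv_card)
  moreover have "length (filter (\<lambda>s. 2 \<le> s) (leaf_gaps ls)) = 3 * (Suc n - 2 * length ls)"
  proof (cases n)
    case 0
    then show ?thesis using I by (simp add: leaf_gaps_def)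
  next
    case (Suc n')
    then show ?thesis using I count_full_gaps[of ls] by simp
  qed
  ultimately show ?thesis by simp
qed

subsection \<open>The number of leaves as a Markov chain\<close>

definition split_prob :: "nat \<Rightarrow> nat \<Rightarrow> real" where
  "split_prob n L = 3 * real (n + 1 - 2 * L) / real (n + 1)"

definition leaves_step :: "nat \<Rightarrow> nat \<Rightarrow> nat pmf" where
  "leaves_step n L = map_pmf (\<lambda>b. if b then Suc L else L) (bernoulli_pmf (split_prob n L))"

primrec leaves_pmf :: "nat \<Rightarrow> nat pmf" where
  leaves_pmf_0: "leaves_pmf 0 = return_pmf 1"
| leaves_pmf_Suc: "leaves_pmf (Suc n) = leaves_pmf n \<bind> leaves_step n"

lemma map_length_leafsizes_pmf: "map_pmf length (leafsizes_pmf n) = leaves_pmf n"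
proof (induction n)
  case 0
  then show ?case by (simp add: leafsizes_pmf_0 leaves_pmf_0)
next
  case (Suc n)
  have "map_pmf length (leafsizes_pmf (Suc n)) = leafsizes_pmf n \<bind> (\<lambda>ls. map_pmf (\<lambda>r. length (ins_gap 1 ls r)) (pmf_of_set {..n}))"
    by (simp add: leafsizes_pmf_Suc map_bind_pmf pmf.map_comp o_def)
  also have "\<dots> = leafsizes_pmf n \<bind> (\<lambda>ls. leaves_step n (length ls))"
  proof (intro bind_pmf_cong refl)
    fix ls assume a: "ls \<in> set_pmf (leafsizes_pmf n)"
    note I = leafsizes_pmf_support[OF a]
    let ?L = "length ls"
    have "map_pmf (\<lambda>r. length (ins_gap 1 ls r)) (pmf_of_set {..n}) =
          map_pmf (\<lambda>b. if b then Suc ?L else ?L) (map_pmf (\<lambda>r. 2 \<le> leaf_gaps ls ! r) (pmf_of_set {..n}))"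
      unfolding pmf.map_comp o_def
    proof (intro map_pmf_cong refl)
      fix r assume "r \<in> set_pmf (pmf_of_set {..n::nat})"
      then have "r < length (leaf_gaps ls)" using I by (simp add: length_leaf_gaps)
      then show "length (ins_gap 1 ls r) = (if 2 \<le> leaf_gaps ls ! r then Suc ?L else ?L)" by (simp add: length_ins_gap)
    qed
    also have "map_pmf (\<lambda>r. 2 \<le> leaf_gaps ls ! r) (pmf_of_set {..n}) = bernoulli_pmf (split_prob n ?L)"
      using map_pmf_pred_pmf_of_set[of "{..n}" "\<lambda>r. 2 \<le> leaf_gaps ls ! r"] card_full_gaps[OF a]
      by (simp add: split_prob_def)
    finally show "map_pmf (\<lambda>r. length (ins_gap 1 ls r)) (pmf_of_set {..n}) = leaves_step n (length ls)"
      by (simp add: leaves_step_def)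
  qed
  also have "\<dots> = map_pmf length (leafsizes_pmf n) \<bind> leaves_step n" by (simp add: map_pmf_def bind_assoc_pmf bind_return_pmf)
  finally show ?case using Suc by (simp add: leaves_pmf_Suc)
qed

lemma L_dist_eq_leaves_pmf: "L_dist n = map_pmf real (leaves_pmf n)"
proof -
  have "L_dist n = map_pmf real (map_pmf (\<lambda>xs. leaves (build 1 xs)) (pmf_of_set (permutations_of_set {1..n})))"
    by (simp add: L_dist_def pmf.map_comp o_def)
  also have "map_pmf (\<lambda>xs. leaves (build 1 xs)) (pmf_of_set (permutations_of_set {1..n})) =
     map_pmf length (map_pmf (\<lambda>xs. leafsizes (build 1 xs)) (pmf_of_set (permutations_of_set {1..n})))"
    by (simp add: pmf.map_comp o_def leaves_eq_length_leafsizes)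
  also have "\<dots> = leaves_pmf n" using leafsizes_build_random_permutation[of "{1..n}"] map_length_leafsizes_pmf[of n] by simp
  finally show ?thesis .
qed

lemma sum_list_Suc_bounds:
  "\<forall>s\<in>set ls. s = 1 \<or> s = 2 \<Longrightarrow> 2 * length ls \<le> sum_list (map Suc ls) \<and> sum_list (map Suc ls) \<le> 3 * length ls"
  by (induction ls) auto

lemma leaves_pmf_support:
  assumes "L \<in> set_pmf (leaves_pmf n)"
  shows "(n = 0 \<longrightarrow> L = 1) \<and> (0 < n \<longrightarrow> 2 * L \<le> Suc n \<and> Suc n \<le> 3 * L)"
proof -
  obtain ls where "ls \<in> set_pmf (leafsizes_pmf n)" "L = length ls"
    using assms by (auto simp flip: map_length_leafsizes_pmf)
  then show ?thesis using leafsizes_pmf_support sum_list_Suc_bounds by fastforce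
qed

lemma leaves_pmf_le: "L \<in> set_pmf (leaves_pmf n) \<Longrightarrow> L \<le> Suc n"
  using leaves_pmf_support[of L n] by (cases n) auto

lemma split_prob_eq:
  "0 < n \<Longrightarrow> L \<in> set_pmf (leaves_pmf n) \<Longrightarrow> split_prob n L = 3 - 6 * real L / real (Suc n)"
proof -
  assume a: "0 < n" "L \<in> set_pmf (leaves_pmf n)"
  then have "real (Suc n - 2 * L) = real (Suc n) - 2 * real L" using leaves_pmf_support[OF a(2)] by (simp add: of_nat_diff)
  then show ?thesis unfolding split_prob_def by (simp add: field_simps)
qed

lemma split_prob_01:
  assumes L: "L \<in> set_pmf (leaves_pmf n)"
  shows "0 \<le> split_prob n L \<and> split_prob n L \<le> 1"
proof (cases "n = 0")
  case True
  then show ?thesis using leaves_pmf_support[OF L] by (simp add: split_prob_def)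
next
  case False
  then have "2 * real L \<le> real n + 1" "real n + 1 \<le> 3 * real L"
    using leaves_pmf_support[OF L] by linarith+
  then have "6 * real L / (real n + 1) \<le> 3" "2 \<le> 6 * real L / (real n + 1)"
    by (simp_all add: divide_le_eq le_divide_eq)
  then show ?thesis using split_prob_eq[of n L] False L by (simp add: add.commute)
qed

lemma set_pmf_leaves_step: "b \<in> set_pmf (leaves_step n L) \<Longrightarrow> b = L \<or> b = Suc L"
  by (auto simp: leaves_step_def)

text \<open>Expectation with respect to \<open>leaves_pmf n\<close> as a finite sum, so that linearity holds without
  integrability side conditions.\<close>

definition E_leaves :: "nat \<Rightarrow> (nat \<Rightarrow> 'a::real_vector) \<Rightarrow> 'a" where
  "E_leaves n g = (\<Sum>L\<le>Suc n. pmf (leaves_pmf n) L *\<^sub>R g L)"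

lemma integral_leaves_pmf:
  "(\<integral>L. g L \<partial>measure_pmf (leaves_pmf n)) = E_leaves n (g :: nat \<Rightarrow> 'a::{banach, second_countable_topology})"
  unfolding E_leaves_def by (rule integral_measure_pmf) (use leaves_pmf_le in auto)

lemma E_leaves_cong:
  "(\<And>L. L \<in> set_pmf (leaves_pmf n) \<Longrightarrow> g L = h L) \<Longrightarrow> E_leaves n g = E_leaves n h"
  unfolding E_leaves_def by (intro sum.cong refl) (metis pmf_eq_0_set_pmf scale_zero_left)

lemma E_leaves_add: "E_leaves n (\<lambda>L. g L + h L) = E_leaves n g + E_leaves n h"
  by (simp add: E_leaves_def scaleR_add_right sum.distrib)

lemma E_leaves_scaleR: "E_leaves n (\<lambda>L. c *\<^sub>R g L) = c *\<^sub>R E_leaves n g"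
  by (simp add: E_leaves_def scaleR_sum_right mult.commute del: sum.atMost_Suc)

lemma E_leaves_mult: "E_leaves n (\<lambda>L. c * g L) = c * (E_leaves n g :: real)"
  using E_leaves_scaleR[of n c g] by simp

lemma E_leaves_mult_right: "E_leaves n (\<lambda>L. g L * c) = E_leaves n g * (c :: 'a :: real_algebra)"
  by (simp add: E_leaves_def sum_distrib_right del: sum.atMost_Suc)

lemma E_leaves_divide: "E_leaves n (\<lambda>L. g L / c) = E_leaves n g / (c :: real)"
  using E_leaves_mult[of n "1 / c" g] by (simp add: field_simps)

lemma E_leaves_diff: "E_leaves n (\<lambda>L. g L - h L) = E_leaves n g - E_leaves n h"
  by (simp add: E_leaves_def scaleR_diff_right sum_subtractf)

lemma E_leaves_const: "E_leaves n (\<lambda>L. c) = c"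
proof -
  have "(\<Sum>L\<le>Suc n. pmf (leaves_pmf n) L) = 1"
    using sum_pmf_eq_1[of "{..Suc n}" "leaves_pmf n"] leaves_pmf_le by auto
  then show ?thesis by (simp add: E_leaves_def flip: scaleR_sum_left)
qed

lemma E_leaves_mono:
  "(\<And>L. L \<in> set_pmf (leaves_pmf n) \<Longrightarrow> g L \<le> h L) \<Longrightarrow> E_leaves n g \<le> (E_leaves n h :: real)"
  unfolding E_leaves_def
proof (intro sum_mono)
  fix L assume "\<And>L. L \<in> set_pmf (leaves_pmf n) \<Longrightarrow> g L \<le> h L"
  then show "pmf (leaves_pmf n) L *\<^sub>R g L \<le> pmf (leaves_pmf n) L *\<^sub>R h L"
    by (cases "L \<in> set_pmf (leaves_pmf n)") (auto simp: mult_left_mono set_pmf_eq)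
qed

lemma norm_E_leaves_le: "norm (E_leaves n g) \<le> E_leaves n (\<lambda>L. norm (g L))"
  unfolding E_leaves_def by (rule order.trans[OF norm_sum]) simp

lemma integral_leaves_step:
  fixes g :: "nat \<Rightarrow> 'a::{banach, second_countable_topology}"
  assumes "0 \<le> split_prob n L" "split_prob n L \<le> 1"
  shows "(\<integral>b. g b \<partial>measure_pmf (leaves_step n L)) = split_prob n L *\<^sub>R g (Suc L) + (1 - split_prob n L) *\<^sub>R g L"
proof -
  have "(\<integral>b. g b \<partial>measure_pmf (leaves_step n L)) = (\<integral>b. g (if b then Suc L else L) \<partial>measure_pmf (bernoulli_pmf (split_prob n L)))"
    by (simp add: leaves_step_def)
  also have "\<dots> = (\<Sum>b\<in>UNIV. pmf (bernoulli_pmf (split_prob n L)) b *\<^sub>R g (if b then Suc L else L))"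
    by (rule integral_measure_pmf) auto
  also have "\<dots> = split_prob n L *\<^sub>R g (Suc L) + (1 - split_prob n L) *\<^sub>R g L"
    using assms by (simp add: UNIV_bool)
  finally show ?thesis .
qed

lemma E_leaves_Suc:
  fixes g :: "nat \<Rightarrow> 'a::{banach, second_countable_topology}"
  shows "E_leaves (Suc n) g = E_leaves n (\<lambda>L. split_prob n L *\<^sub>R g (Suc L) + (1 - split_prob n L) *\<^sub>R g L)"
proof -
  have "E_leaves (Suc n) g = (\<Sum>a\<le>Suc (Suc n). (\<Sum>L\<le>Suc n. pmf (leaves_pmf n) L * pmf (leaves_step n L) a) *\<^sub>R g a)"
  proof -
    have "pmf (leaves_pmf (Suc n)) a = (\<Sum>L\<le>Suc n. pmf (leaves_pmf n) L * pmf (leaves_step n L) a)" for a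
      unfolding leaves_pmf_Suc pmf_bind
      by (subst integral_measure_pmf_real[where A="{..Suc n}"]) (use leaves_pmf_le in \<open>auto simp: mult.commute\<close>)
    then show ?thesis by (simp add: E_leaves_def)
  qed
  also have "\<dots> = (\<Sum>L\<le>Suc n. pmf (leaves_pmf n) L *\<^sub>R (\<Sum>a\<le>Suc (Suc n). pmf (leaves_step n L) a *\<^sub>R g a))"
    by (simp add: scaleR_sum_left scaleR_sum_right sum.swap[of _ "{..Suc (Suc n)}"] del: sum.atMost_Suc)
  also have "\<dots> = E_leaves n (\<lambda>L. split_prob n L *\<^sub>R g (Suc L) + (1 - split_prob n L) *\<^sub>R g L)"
    unfolding E_leaves_def
  proof (intro sum.cong refl)
    fix L assume L: "L \<in> {..Suc n}"
    show "pmf (leaves_pmf n) L *\<^sub>R (\<Sum>a\<le>Suc (Suc n). pmf (leaves_step n L) a *\<^sub>R g a) =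
          pmf (leaves_pmf n) L *\<^sub>R (split_prob n L *\<^sub>R g (Suc L) + (1 - split_prob n L) *\<^sub>R g L)"
    proof (cases "L \<in> set_pmf (leaves_pmf n)")
      case True
      have "(\<Sum>a\<le>Suc (Suc n). pmf (leaves_step n L) a *\<^sub>R g a) = (\<integral>b. g b \<partial>measure_pmf (leaves_step n L))"
      proof (rule integral_measure_pmf[symmetric])
        fix a assume "a \<in> set_pmf (leaves_step n L)"
        then show "a \<in> {..Suc (Suc n)}" using L set_pmf_leaves_step[of a n L] by auto
      qed simp
      then show ?thesis using integral_leaves_step[of n L g] split_prob_01[OF True] by simp
    next
      case False then show ?thesis by (simp add: set_pmf_eq)
    qed
  qed
  finally show ?thesis .
qed

subsection \<open>Mean and variance\<close>

definition mean_leaves :: "nat \<Rightarrow> real" where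
  "mean_leaves n = E_leaves n (\<lambda>L. real L)"

definition moment2_leaves :: "nat \<Rightarrow> real" where
  "moment2_leaves n = E_leaves n (\<lambda>L. real L ^ 2)"

definition sigma2 :: "nat \<Rightarrow> real" where
  "sigma2 n = 12 / 637 * (real n + 1)"

lemma sigma2_pos: "0 < sigma2 n"
  by (simp add: sigma2_def)

lemma mean_leaves_Suc:
  assumes n: "0 < n"
  shows "mean_leaves (Suc n) = (1 - 6 / real (Suc n)) * mean_leaves n + 3"
proof -
  have "mean_leaves (Suc n) = E_leaves n (\<lambda>L. split_prob n L * real (Suc L) + (1 - split_prob n L) * real L)"
    by (simp add: mean_leaves_def E_leaves_Suc)
  also have "\<dots> = E_leaves n (\<lambda>L. (1 - 6 / real (Suc n)) * real L + 3)"
  proof (intro E_leaves_cong)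
    fix L assume L: "L \<in> set_pmf (leaves_pmf n)"
    have "split_prob n L * real (Suc L) + (1 - split_prob n L) * real L = real L + split_prob n L" by (simp add: algebra_simps)
    also have "\<dots> = (1 - 6 / real (Suc n)) * real L + 3" by (simp add: split_prob_eq[OF n L] algebra_simps)
    finally show "split_prob n L * real (Suc L) + (1 - split_prob n L) * real L = (1 - 6 / real (Suc n)) * real L + 3" .
  qed
  also have "\<dots> = (1 - 6 / real (Suc n)) * mean_leaves n + 3"
    by (simp add: E_leaves_add E_leaves_mult E_leaves_const mean_leaves_def)
  finally show ?thesis .
qed

lemma moment2_leaves_Suc:
  assumes n: "0 < n"
  shows "moment2_leaves (Suc n) =
           (1 - 12 / real (Suc n)) * moment2_leaves n + (6 - 6 / real (Suc n)) * mean_leaves n + 3"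
proof -
  have "moment2_leaves (Suc n) = E_leaves n (\<lambda>L. split_prob n L * real (Suc L) ^ 2 + (1 - split_prob n L) * real L ^ 2)"
    by (simp add: moment2_leaves_def E_leaves_Suc)
  also have "\<dots> = E_leaves n (\<lambda>L. (1 - 12 / real (Suc n)) * real L ^ 2 + ((6 - 6 / real (Suc n)) * real L + 3))"
  proof (intro E_leaves_cong)
    fix L assume L: "L \<in> set_pmf (leaves_pmf n)"
    have "split_prob n L * real (Suc L) ^ 2 + (1 - split_prob n L) * real L ^ 2 = real L ^ 2 + split_prob n L * (2 * real L + 1)"
      by (simp add: algebra_simps power2_eq_square)
    also have "\<dots> = (1 - 12 / real (Suc n)) * real L ^ 2 + ((6 - 6 / real (Suc n)) * real L + 3)"
      by (simp add: split_prob_eq[OF n L] algebra_simps power2_eq_square add_divide_distrib)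
    finally show "split_prob n L * real (Suc L) ^ 2 + (1 - split_prob n L) * real L ^ 2 =
      (1 - 12 / real (Suc n)) * real L ^ 2 + ((6 - 6 / real (Suc n)) * real L + 3)" .
  qed
  also have "\<dots> = (1 - 12 / real (Suc n)) * moment2_leaves n + (6 - 6 / real (Suc n)) * mean_leaves n + 3"
    by (simp add: E_leaves_add E_leaves_mult E_leaves_const mean_leaves_def moment2_leaves_def)
  finally show ?thesis .
qed

text \<open>The factors \<open>1 - 6 / (n + 1)\<close> and \<open>1 - 12 / (n + 1)\<close> vanish at \<open>n = 5\<close> and \<open>n = 11\<close>, so the
  recursions forget their initial values there: this is why the formulas are exact from \<open>n = 6\<close>
  and \<open>n = 12\<close> on.\<close>

lemma mean_leaves_eq: "6 \<le> n \<Longrightarrow> mean_leaves n = 3 * (real n + 1) / 7"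
proof (induction n rule: nat_induct_at_least)
  case base
  show ?case using mean_leaves_Suc[of 5] by (simp add: numeral_eq_Suc)
next
  case (Suc n)
  have "mean_leaves (Suc n) = (1 - 6 / (real n + 1)) * (3 * (real n + 1) / 7) + 3" using mean_leaves_Suc[of n] Suc by simp
  also have "\<dots> = 3 * (real (Suc n) + 1) / 7" by (simp add: field_simps)
  finally show ?case .
qed

lemma moment2_leaves_eq:
  "12 \<le> n \<Longrightarrow> moment2_leaves n = (3 * (real n + 1) / 7)^2 + 12 / 637 * (real n + 1)"
proof (induction n rule: nat_induct_at_least)
  case base
  have "mean_leaves 11 = 36 / 7" using mean_leaves_eq[of 11] by simp
  then show ?case using moment2_leaves_Suc[of 11] by (simp add: numeral_eq_Suc)
next
  case (Suc n)
  have m: "mean_leaves n = 3 * (real n + 1) / 7" using mean_leaves_eq Suc by simp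
  have "moment2_leaves (Suc n) = (1 - 12 / (real n + 1)) * ((3 * (real n + 1) / 7)^2 + 12 / 637 * (real n + 1))
      + (6 - 6 / (real n + 1)) * (3 * (real n + 1) / 7) + 3" using moment2_leaves_Suc[of n] Suc m by (simp add: add.commute)
  also have "\<dots> = (3 * (real (Suc n) + 1) / 7)^2 + 12 / 637 * (real (Suc n) + 1)"
  proof -
    have "(1 - 12 / x) * ((3 * x / 7)^2 + 12 / 637 * x) + (6 - 6 / x) * (3 * x / 7) + 3 =
       (3 * (x + 1) / 7)^2 + 12 / 637 * (x + 1)" if "x > 0" for x :: real
      using that by (simp add: field_simps power2_eq_square)
    from this[of "real n + 1"] show ?thesis by (simp add: add.commute)
  qed
  finally show ?case .
qed

lemma E_leaves_var:
  "E_leaves n (\<lambda>L. (real L - mean_leaves n)^2) = moment2_leaves n - (mean_leaves n)^2"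
proof -
  have "E_leaves n (\<lambda>L. (real L - mean_leaves n)^2) =
        E_leaves n (\<lambda>L. real L ^ 2 + ((- 2 * mean_leaves n) * real L + (mean_leaves n)^2))"
    by (intro E_leaves_cong) (simp add: power2_eq_square algebra_simps)
  also have "\<dots> = moment2_leaves n + ((- 2 * mean_leaves n) * mean_leaves n + (mean_leaves n)^2)"
    by (simp only: E_leaves_add E_leaves_mult E_leaves_const mean_leaves_def moment2_leaves_def)
  finally show ?thesis by (simp add: power2_eq_square)
qed

lemma var_leaves_eq:
  assumes "12 \<le> n"
  shows "E_leaves n (\<lambda>L. (real L - mean_leaves n)^2) = sigma2 n"
proof -
  have m: "mean_leaves n = 3 * (real n + 1) / 7" using assms by (simp add: mean_leaves_eq)
  have "E_leaves n (\<lambda>L. (real L - mean_leaves n)^2) = moment2_leaves n - (mean_leaves n)^2"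
    by (rule E_leaves_var)
  also have "\<dots> = sigma2 n"
    unfolding moment2_leaves_eq[OF assms] m sigma2_def by (simp add: field_simps power2_eq_square)
  finally show ?thesis .
qed

lemma expectation_L_dist: "measure_pmf.expectation (L_dist n) (\<lambda>x. x) = mean_leaves n"
  by (simp add: L_dist_eq_leaves_pmf integral_leaves_pmf mean_leaves_def)

lemma variance_L_dist:
  "measure_pmf.variance (L_dist n) (\<lambda>x. x) = E_leaves n (\<lambda>L. (real L - mean_leaves n)^2)"
  by (simp add: expectation_L_dist) (simp add: L_dist_eq_leaves_pmf integral_leaves_pmf)

lemma L_dist_moments:
  assumes "n > 11"
  shows "measure_pmf.expectation (L_dist n) (\<lambda>x. x) = 3 / 7 * (real n + 1) \<and>
         measure_pmf.variance (L_dist n) (\<lambda>x. x) = 12 / 637 * (real n + 1)"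
proof
  show "measure_pmf.expectation (L_dist n) (\<lambda>x. x) = 3 / 7 * (real n + 1)"
    using assms by (simp add: expectation_L_dist mean_leaves_eq)
  have "measure_pmf.variance (L_dist n) (\<lambda>x. x) = sigma2 n"
    using variance_L_dist[of n] var_leaves_eq[of n] assms by simp
  then show "measure_pmf.variance (L_dist n) (\<lambda>x. x) = 12 / 637 * (real n + 1)"
    by (simp add: sigma2_def)
qed


lemma exp_minus_approx: "0 \<le> (y::real) \<Longrightarrow> \<bar>exp (- y) - (1 - y)\<bar> \<le> y^2 / 2"
proof -
  assume y: "0 \<le> y"
  have lo: "1 - y \<le> exp (- y)" using exp_ge_add_one_self[of "-y"] by simp
  define D where "D = 1 + y + y^2 / 2"
  have D: "D \<le> exp y" using exp_lower_Taylor_quadratic[OF y] by (simp add: D_def)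
  have Dpos: "0 < D" using y by (simp add: D_def add_pos_nonneg)
  have "exp (- y) = 1 / exp y" by (simp add: exp_minus field_simps)
  also have "\<dots> \<le> 1 / D" using D Dpos by (intro divide_left_mono) auto
  also have "\<dots> \<le> 1 - y + y^2 / 2"
  proof -
    have "1 \<le> D * (1 - y + y^2 / 2)" unfolding D_def by (simp add: algebra_simps power2_eq_square power4_eq_xxxx)
      (smt (verit) mult_nonneg_nonneg y zero_le_mult_iff)
    then show ?thesis using Dpos by (simp add: divide_le_eq mult.commute)
  qed
  finally show ?thesis using lo by simp
qed

lemma iexp_taylor2:
  "cmod (iexp x - (1 + \<i> * complex_of_real x - complex_of_real (x^2 / 2))) \<le> \<bar>x\<bar>^3 / 6"
proof -
  have "(\<Sum>k\<le>2. (\<i> * complex_of_real x)^k / fact k) = 1 + \<i> * complex_of_real x - complex_of_real (x^2 / 2)"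
    by (simp add: numeral_2_eq_2 power2_eq_square field_simps)
  then show ?thesis using iexp_approx1[of x 2] by (simp add: numeral_3_eq_3)
qed

definition centred_bernoulli_char :: "real \<Rightarrow> real \<Rightarrow> complex" where
  "centred_bernoulli_char q th = complex_of_real q * iexp (th * (1 - q)) + complex_of_real (1 - q) * iexp (- (th * q))"

lemma centred_bernoulli_char_approx:
  assumes q: "0 \<le> q" "q \<le> 1"
  shows "cmod (centred_bernoulli_char q th - complex_of_real (1 - th^2 * (q * (1 - q)) / 2)) \<le> \<bar>th\<bar>^3 / 6"
proof -
  define a where "a = th * (1 - q)"
  define b where "b = - (th * q)"
  let ?T = "\<lambda>x::real. 1 + \<i> * complex_of_real x - complex_of_real (x^2 / 2)"
  have id: "centred_bernoulli_char q th - complex_of_real (1 - th^2 * (q * (1 - q)) / 2) =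
     complex_of_real q * (iexp a - ?T a) + complex_of_real (1 - q) * (iexp b - ?T b)"
    unfolding centred_bernoulli_char_def a_def b_def
    by (simp add: algebra_simps power2_eq_square) (simp add: field_simps)
  have "cmod (centred_bernoulli_char q th - complex_of_real (1 - th^2 * (q * (1 - q)) / 2)) \<le>
     q * cmod (iexp a - ?T a) + (1 - q) * cmod (iexp b - ?T b)"
  proof -
    have c1: "cmod (1 - complex_of_real q) = 1 - q"
      using q by (metis abs_of_nonneg diff_ge_0_iff_ge norm_of_real of_real_1 of_real_diff)
    show ?thesis unfolding id using q c1 by (auto intro!: order.trans[OF norm_triangle_ineq] simp: norm_mult)
  qed
  also have "\<dots> \<le> q * (\<bar>a\<bar>^3 / 6) + (1 - q) * (\<bar>b\<bar>^3 / 6)"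
    using q by (intro add_mono mult_left_mono iexp_taylor2) auto
  also have "\<dots> \<le> q * (\<bar>th\<bar>^3 / 6) + (1 - q) * (\<bar>th\<bar>^3 / 6)"
  proof -
    have "\<bar>a\<bar> \<le> \<bar>th\<bar>" "\<bar>b\<bar> \<le> \<bar>th\<bar>" using q by (auto simp: a_def b_def abs_mult mult_left_le)
    then have "\<bar>a\<bar>^3 \<le> \<bar>th\<bar>^3" "\<bar>b\<bar>^3 \<le> \<bar>th\<bar>^3" by (auto intro: power_mono)
    then show ?thesis using q by (intro add_mono mult_left_mono) auto
  qed
  also have "\<dots> = \<bar>th\<bar>^3 / 6" by (simp add: field_simps)
  finally show ?thesis .
qed

lemma centred_bernoulli_char_approx_exp:
  assumes q: "0 \<le> q" "q \<le> 1" and Q: "0 \<le> Q" "Q \<le> 1"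
  shows "cmod (centred_bernoulli_char q th - complex_of_real (exp (- (th^2 * Q / 2)))) \<le>
     \<bar>th\<bar>^3 / 6 + th^2 / 2 * \<bar>q * (1 - q) - Q\<bar> + th^4 / 8"
proof -
  have e1: "cmod (complex_of_real (1 - th^2 * (q * (1 - q)) / 2) - complex_of_real (1 - th^2 * Q / 2))
     = th^2 / 2 * \<bar>q * (1 - q) - Q\<bar>"
  proof -
    have "1 - th^2 * (q * (1 - q)) / 2 - (1 - th^2 * Q / 2) = th^2 / 2 * (Q - q * (1 - q))"
      by (simp add: field_simps)
    then have "\<bar>1 - th^2 * (q * (1 - q)) / 2 - (1 - th^2 * Q / 2)\<bar> = \<bar>th^2 / 2\<bar> * \<bar>Q - q * (1 - q)\<bar>"
      by (simp only: abs_mult)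
    then have "\<bar>1 - th^2 * (q * (1 - q)) / 2 - (1 - th^2 * Q / 2)\<bar> = th^2 / 2 * \<bar>q * (1 - q) - Q\<bar>"
      by (simp add: abs_minus_commute)
    then show ?thesis by (metis norm_of_real of_real_diff)
  qed
  have e2: "cmod (complex_of_real (1 - th^2 * Q / 2) - complex_of_real (exp (- (th^2 * Q / 2)))) \<le> th^4 / 8"
  proof -
    have "\<bar>exp (- (th^2 * Q / 2)) - (1 - th^2 * Q / 2)\<bar> \<le> (th^2 * Q / 2)^2 / 2"
      using Q by (intro exp_minus_approx) auto
    also have "\<dots> \<le> th^4 / 8"
    proof -
      have "(th^2 * Q)^2 \<le> (th^2)^2" using Q by (intro power_mono) (auto simp: mult_left_le)
      then show ?thesis by (simp add: power_mult_distrib power2_eq_square field_simps power4_eq_xxxx)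
    qed
    finally show ?thesis by (simp flip: of_real_diff add: abs_minus_commute)
  qed
  have "cmod (centred_bernoulli_char q th - complex_of_real (exp (- (th^2 * Q / 2)))) \<le>
     cmod (centred_bernoulli_char q th - complex_of_real (1 - th^2 * (q * (1 - q)) / 2)) +
     cmod (complex_of_real (1 - th^2 * (q * (1 - q)) / 2) - complex_of_real (1 - th^2 * Q / 2)) +
     cmod (complex_of_real (1 - th^2 * Q / 2) - complex_of_real (exp (- (th^2 * Q / 2))))"
    by (smt (verit) norm_triangle_ineq4 norm_diff_triangle_ineq diff_add_cancel add_diff_eq norm_triangle_ineq)
  then show ?thesis using centred_bernoulli_char_approx[OF q, of th] e1 e2 by linarith
qed

lemma sum_inverse_sqrt_le: "(\<Sum>j<n. 1 / sqrt (real j + 1)) \<le> 2 * sqrt (real n)"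
proof (induction n)
  case (Suc n)
  have key: "2 * sqrt (real n) + 1 / sqrt (real n + 1) \<le> 2 * sqrt (real n + 1)"
  proof -
    have s: "0 < sqrt (real n + 1)" by simp
    have "sqrt (real n) * sqrt (real n + 1) \<le> real n + 1 / 2"
    proof -
      have "sqrt (real n) * sqrt (real n + 1) = sqrt (real n * (real n + 1))" by (simp add: real_sqrt_mult)
      also have "\<dots> \<le> sqrt ((real n + 1/2)^2)" by (intro real_sqrt_le_mono) (simp add: power2_eq_square algebra_simps)
      also have "\<dots> = real n + 1/2" by simp
      finally show ?thesis .
    qed
    then have "2 * sqrt (real n) * sqrt (real n + 1) + 1 \<le> 2 * (sqrt (real n + 1) * sqrt (real n + 1))"
      by simp
    then show ?thesis using s by (simp add: field_simps)
  qed
  show ?case using Suc key by (simp add: add.commute)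
qed simp

subsection \<open>Central limit theorem\<close>

definition centred :: "nat \<Rightarrow> nat \<Rightarrow> real" where
  "centred k L = real L - 3 * (real k + 1) / 7"

definition damping :: "nat \<Rightarrow> nat \<Rightarrow> real" where
  "damping n k = (\<Prod>j\<in>{k..<n}. 1 - 6 / real (Suc j))"

definition centred_var :: "nat \<Rightarrow> real" where
  "centred_var k = E_leaves k (\<lambda>L. (centred k L)^2)"

definition mean_split_var :: "nat \<Rightarrow> real" where
  "mean_split_var k = E_leaves k (\<lambda>L. split_prob k L * (1 - split_prob k L))"

definition residual_var :: "nat \<Rightarrow> nat \<Rightarrow> real" where
  "residual_var n k = (centred_var n - (damping n k)^2 * centred_var k) / sigma2 n"

text \<open>Given the state \<open>L\<close> at time \<open>k\<close>, the centred leaf count at time \<open>n\<close> has mean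
  \<open>damping n k * centred k L\<close>, and its conditional variance has expectation \<open>residual_var n k * sigma2 n\<close>.
  \<open>hybrid_char n t k\<close> runs the chain up to time \<open>k\<close> and replaces the remaining steps by a Gaussian
  factor: at \<open>k = n\<close> it is the characteristic function of the standardised \<open>L\<^sub>n\<close>, at \<open>k = 5\<close>, where
  the damping vanishes, it is \<open>exp (- t\<^sup>2 / 2)\<close>.\<close>

definition hybrid_char :: "nat \<Rightarrow> real \<Rightarrow> nat \<Rightarrow> complex" where
  "hybrid_char n t k =
     E_leaves k (\<lambda>L. iexp (t * damping n k / sqrt (sigma2 n) * centred k L)) *
     complex_of_real (exp (- (t^2 * residual_var n k / 2)))"

definition clt_error :: "nat \<Rightarrow> real \<Rightarrow> real" where
  "clt_error n t =
     (let \<tau> = \<bar>t\<bar> / sqrt (sigma2 n) in real n * \<tau>^3 / 6 + 78 * \<tau>^2 * sqrt (real n) + real n * \<tau>^4 / 8)"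

lemma clt_error_eq:
  "clt_error n t = \<bar>t\<bar>^3 / 6 * (real n / sqrt (sigma2 n)^3) + 78 * t^2 * (sqrt (real n) / sigma2 n) +
                   t^4 / 8 * (real n / (sigma2 n)^2)"
proof -
  have s2: "sqrt (sigma2 n)^2 = sigma2 n" using sigma2_pos[of n] by simp
  have s4: "sqrt (sigma2 n)^4 = (sigma2 n)^2" using s2 by (metis power_mult num_double numeral_times_numeral)
  show ?thesis unfolding clt_error_def Let_def power_divide s2 s4 by (simp add: power_even_abs mult_ac)
qed

lemma clt_error_tendsto_0: "(\<lambda>n. clt_error n t) \<longlonglongrightarrow> 0"
proof -
  have "(\<lambda>n. real n / sqrt (sigma2 n)^3) \<longlonglongrightarrow> 0" "(\<lambda>n. sqrt (real n) / sigma2 n) \<longlonglongrightarrow> 0"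
       "(\<lambda>n. real n / (sigma2 n)^2) \<longlonglongrightarrow> 0"
    unfolding sigma2_def by real_asymp+
  then show ?thesis unfolding clt_error_eq by (intro tendsto_add_zero tendsto_mult_right_zero)
qed

lemma damping_step: "j < n \<Longrightarrow> damping n j = (1 - 6 / real (Suc j)) * damping n (Suc j)"
  unfolding damping_def by (simp add: prod.atLeast_Suc_lessThan)

lemma damping_self: "damping n n = 1"
  by (simp add: damping_def)

lemma damping_5: "5 < n \<Longrightarrow> damping n 5 = 0"
  using damping_step[of 5 n] by simp

lemma damping_01: "5 \<le> k \<Longrightarrow> 0 \<le> damping n k \<and> damping n k \<le> 1"
  unfolding damping_def by (auto intro!: prod_nonneg prod_le_1 simp: field_simps)

lemma split_prob_centred:
  "0 < j \<Longrightarrow> L \<in> set_pmf (leaves_pmf j) \<Longrightarrow> split_prob j L = 3 / 7 - 6 * centred j L / real (Suc j)"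
  using split_prob_eq[of j L] by (simp add: centred_def field_simps)

lemma E_leaves_Suc_centred:
  fixes g :: "real \<Rightarrow> 'a::{banach, second_countable_topology}"
  shows "E_leaves (Suc j) (\<lambda>L. g (centred (Suc j) L)) =
    E_leaves j (\<lambda>L. split_prob j L *\<^sub>R g (centred j L + 4 / 7) + (1 - split_prob j L) *\<^sub>R g (centred j L - 3 / 7))"
proof -
  have "centred (Suc j) (Suc L) = centred j L + 4 / 7" "centred (Suc j) L = centred j L - 3 / 7" for L
    by (simp_all add: centred_def field_simps)
  then show ?thesis using E_leaves_Suc[of j "\<lambda>L. g (centred (Suc j) L)"] by simp
qed

lemma centred_var_Suc:
  assumes j: "0 < j"
  shows "centred_var (Suc j) = (1 - 6 / real (Suc j))^2 * centred_var j + mean_split_var j"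
proof -
  have "centred_var (Suc j) =
      E_leaves j (\<lambda>L. split_prob j L * (centred j L + 4 / 7)^2 + (1 - split_prob j L) * (centred j L - 3 / 7)^2)"
    unfolding centred_var_def using E_leaves_Suc_centred[of j "\<lambda>x. x^2"] by simp
  also have "\<dots> = E_leaves j (\<lambda>L. (1 - 6 / real (Suc j))^2 * (centred j L)^2 + split_prob j L * (1 - split_prob j L))"
  proof (intro E_leaves_cong)
    fix L assume L: "L \<in> set_pmf (leaves_pmf j)"
    have "centred j L + split_prob j L - 3 / 7 = (1 - 6 / real (Suc j)) * centred j L"
      using split_prob_centred[OF j L] by (simp add: algebra_simps)
    moreover have "split_prob j L * (centred j L + 4 / 7)^2 + (1 - split_prob j L) * (centred j L - 3 / 7)^2
        = (centred j L + split_prob j L - 3 / 7)^2 + split_prob j L * (1 - split_prob j L)"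
      by (simp add: power2_eq_square field_simps)
    ultimately show "split_prob j L * (centred j L + 4 / 7)^2 + (1 - split_prob j L) * (centred j L - 3 / 7)^2 =
        (1 - 6 / real (Suc j))^2 * (centred j L)^2 + split_prob j L * (1 - split_prob j L)"
      by (simp add: power_mult_distrib)
  qed
  also have "\<dots> = (1 - 6 / real (Suc j))^2 * centred_var j + mean_split_var j"
    by (simp add: E_leaves_add E_leaves_mult centred_var_def mean_split_var_def)
  finally show ?thesis .
qed

lemma centred_var_eq: "12 \<le> n \<Longrightarrow> centred_var n = sigma2 n"
  using var_leaves_eq[of n] by (simp add: centred_var_def centred_def mean_leaves_eq)

lemma mean_split_var_01: "0 \<le> mean_split_var j \<and> mean_split_var j \<le> 1"
proof
  show "0 \<le> mean_split_var j"
    using E_leaves_mono[of j "\<lambda>_. 0" "\<lambda>L. split_prob j L * (1 - split_prob j L)"] split_prob_01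
    by (simp add: E_leaves_const mean_split_var_def)
  show "mean_split_var j \<le> 1"
    using E_leaves_mono[of j "\<lambda>L. split_prob j L * (1 - split_prob j L)" "\<lambda>_. 1"] split_prob_01
    by (simp add: E_leaves_const mult_le_one mean_split_var_def)
qed

lemma residual_var_self: "residual_var n n = 0"
  by (simp add: residual_var_def damping_self)

lemma residual_var_5: "12 \<le> n \<Longrightarrow> residual_var n 5 = 1"
  using damping_5[of n] centred_var_eq[of n] sigma2_pos[of n] by (simp add: residual_var_def)

lemma residual_var_step:
  assumes "0 < j" "j < n"
  shows "residual_var n j = residual_var n (Suc j) + (damping n (Suc j))^2 * mean_split_var j / sigma2 n"
proof -
  have "(V - (a * w)^2 * X) / c = (V - w^2 * (a^2 * X + Q)) / c + w^2 * Q / c" if "c \<noteq> 0" for V X Q a w c :: real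
    using that by (simp add: field_simps power_mult_distrib)
  then show ?thesis unfolding residual_var_def damping_step[OF assms(2)] centred_var_Suc[OF assms(1)]
    using sigma2_pos[of n] by simp
qed

lemma residual_var_nonneg: "k \<le> n \<Longrightarrow> 0 < k \<Longrightarrow> 0 \<le> residual_var n k"
proof (induction k rule: inc_induct)
  case base
  then show ?case by (simp add: residual_var_self)
next
  case (step k)
  then show ?case using residual_var_step[of k n] mean_split_var_01[of k] sigma2_pos[of n] by simp
qed

lemma E_leaves_Suc_iexp_centred:
  assumes j: "0 < j"
  shows "E_leaves (Suc j) (\<lambda>L. iexp (\<theta> * centred (Suc j) L)) =
         E_leaves j (\<lambda>L. iexp (\<theta> * (1 - 6 / real (Suc j)) * centred j L) * centred_bernoulli_char (split_prob j L) \<theta>)"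
proof -
  have "E_leaves (Suc j) (\<lambda>L. iexp (\<theta> * centred (Suc j) L)) =
      E_leaves j (\<lambda>L. split_prob j L *\<^sub>R iexp (\<theta> * (centred j L + 4 / 7)) +
                      (1 - split_prob j L) *\<^sub>R iexp (\<theta> * (centred j L - 3 / 7)))"
    using E_leaves_Suc_centred[of j "\<lambda>x. iexp (\<theta> * x)"] by simp
  also have "\<dots> = E_leaves j (\<lambda>L. iexp (\<theta> * (1 - 6 / real (Suc j)) * centred j L) * centred_bernoulli_char (split_prob j L) \<theta>)"
  proof (intro E_leaves_cong)
    fix L assume L: "L \<in> set_pmf (leaves_pmf j)"
    let ?a = "\<theta> * (1 - 6 / real (Suc j)) * centred j L" and ?q = "split_prob j L"
    have "\<theta> * (X + 4 / 7) = \<theta> * (1 - 6 / d) * X + \<theta> * (1 - (3 / 7 - 6 * X / d))"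
         "\<theta> * (X - 3 / 7) = \<theta> * (1 - 6 / d) * X + - (\<theta> * (3 / 7 - 6 * X / d))" if "d \<noteq> 0" for d X :: real
      using that by (simp_all add: field_simps)
    then have e: "\<theta> * (centred j L + 4 / 7) = ?a + \<theta> * (1 - ?q)" "\<theta> * (centred j L - 3 / 7) = ?a + - (\<theta> * ?q)"
      unfolding split_prob_centred[OF j L] by simp_all
    have iexp_add: "iexp (x + y) = iexp x * iexp y" for x y :: real
      by (simp add: distrib_left flip: exp_add)
    show "?q *\<^sub>R iexp (\<theta> * (centred j L + 4 / 7)) + (1 - ?q) *\<^sub>R iexp (\<theta> * (centred j L - 3 / 7)) =
          iexp ?a * centred_bernoulli_char ?q \<theta>"
      unfolding e iexp_add centred_bernoulli_char_def by (simp add: scaleR_conv_of_real algebra_simps)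
  qed
  finally show ?thesis .
qed

lemma hybrid_char_step:
  fixes t :: real
  assumes j: "0 < j" "j < n"
  defines "\<theta> \<equiv> t * damping n (Suc j) / sqrt (sigma2 n)"
  shows "hybrid_char n t (Suc j) - hybrid_char n t j =
    E_leaves j (\<lambda>L. iexp (t * damping n j / sqrt (sigma2 n) * centred j L) *
      (centred_bernoulli_char (split_prob j L) \<theta> - complex_of_real (exp (- (\<theta>^2 * mean_split_var j / 2))))) *
    complex_of_real (exp (- (t^2 * residual_var n (Suc j) / 2)))"
proof -
  define E where "E = complex_of_real (exp (- (t^2 * residual_var n (Suc j) / 2)))"
  define G where "G = complex_of_real (exp (- (\<theta>^2 * mean_split_var j / 2)))"
  define a where "a = (\<lambda>L. iexp (t * damping n j / sqrt (sigma2 n) * centred j L))"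
  have a_eq: "a L = iexp (\<theta> * (1 - 6 / real (Suc j)) * centred j L)" for L
    unfolding a_def \<theta>_def damping_step[OF j(2)] by (simp add: mult_ac)
  have "t^2 * residual_var n j / 2 = \<theta>^2 * mean_split_var j / 2 + t^2 * residual_var n (Suc j) / 2"
    unfolding residual_var_step[OF j] \<theta>_def using sigma2_pos[of n] by (simp add: power_divide field_simps)
  then have "- (t^2 * residual_var n j / 2) = - (\<theta>^2 * mean_split_var j / 2) + - (t^2 * residual_var n (Suc j) / 2)"
    by linarith
  then have gauss: "complex_of_real (exp (- (t^2 * residual_var n j / 2))) = G * E"
    unfolding G_def E_def by (simp only: exp_add of_real_mult)
  have "hybrid_char n t (Suc j) = E_leaves j (\<lambda>L. a L * centred_bernoulli_char (split_prob j L) \<theta>) * E"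
    unfolding hybrid_char_def a_eq E_leaves_Suc_iexp_centred[OF j(1)] E_def by (simp add: \<theta>_def mult_ac)
  moreover have "hybrid_char n t j = E_leaves j (\<lambda>L. a L * G) * E"
    unfolding hybrid_char_def gauss E_leaves_mult_right a_def by (simp add: mult_ac)
  ultimately have "hybrid_char n t (Suc j) - hybrid_char n t j =
      (E_leaves j (\<lambda>L. a L * centred_bernoulli_char (split_prob j L) \<theta>) - E_leaves j (\<lambda>L. a L * G)) * E"
    by (simp add: algebra_simps)
  also have "\<dots> = E_leaves j (\<lambda>L. a L * (centred_bernoulli_char (split_prob j L) \<theta> - G)) * E"
    by (simp add: E_leaves_diff[symmetric] right_diff_distrib)
  finally show ?thesis unfolding a_def E_def G_def .
qed
lemma centred_var_le: "centred_var j \<le> 12 * (real j + 1)"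
proof (cases "12 \<le> j")
  case True
  then show ?thesis using centred_var_eq[OF True] by (simp add: sigma2_def)
next
  case False
  have "centred_var j \<le> E_leaves j (\<lambda>L. 12 * (real j + 1))"
    unfolding centred_var_def
  proof (intro E_leaves_mono)
    fix L assume L: "L \<in> set_pmf (leaves_pmf j)"
    have "L \<le> Suc j" using leaves_pmf_le[OF L] .
    then have a: "real L \<le> real j + 1" by simp
    have b: "0 \<le> 3 * (real j + 1) / 7" "3 * (real j + 1) / 7 \<le> real j + 1" by auto
    have c: "0 \<le> real L" by simp
    have "\<bar>centred j L\<bar> \<le> real j + 1" unfolding centred_def abs_le_iff using a b c by (intro conjI) linarith+
    then have "(centred j L)^2 \<le> (real j + 1)^2" using power_mono[of "\<bar>centred j L\<bar>" "real j + 1" 2] by simp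
    also have "\<dots> \<le> 12 * (real j + 1)"
    proof -
      have h: "real j + 1 \<le> 12" using False by simp
      have "(real j + 1) * (real j + 1) \<le> 12 * (real j + 1)" by (rule mult_right_mono[OF h]) simp
      then show ?thesis by (simp add: power2_eq_square)
    qed
    finally show "(centred j L)^2 \<le> 12 * (real j + 1)" .
  qed
  then show ?thesis by (simp add: E_leaves_const)
qed

lemma E_leaves_abs_centred_le: "E_leaves j (\<lambda>L. \<bar>centred j L\<bar>) \<le> 13 / 2 * sqrt (real j + 1)"
proof -
  define s where "s = sqrt (real j + 1)"
  have s: "0 < s" "s^2 = real j + 1" by (simp_all add: s_def)
  have "E_leaves j (\<lambda>L. \<bar>centred j L\<bar>) \<le> E_leaves j (\<lambda>L. s / 2 + 1 / (2 * s) * (centred j L)^2)"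
  proof (intro E_leaves_mono)
    fix L
    have "0 \<le> (\<bar>centred j L\<bar> - s)^2" by simp
    then have "2 * s * \<bar>centred j L\<bar> \<le> s^2 + (centred j L)^2" by (simp add: power2_eq_square algebra_simps)
    then show "\<bar>centred j L\<bar> \<le> s / 2 + 1 / (2 * s) * (centred j L)^2" using s by (simp add: field_simps power2_eq_square)
  qed
  also have "\<dots> = s / 2 + 1 / (2 * s) * centred_var j" by (simp add: E_leaves_add E_leaves_mult E_leaves_const centred_var_def E_leaves_divide)
  also have "\<dots> \<le> s / 2 + 1 / (2 * s) * (12 * s^2)"
    using centred_var_le[of j] s by (intro add_left_mono mult_left_mono) auto
  also have "\<dots> = 13 / 2 * s" using s by (simp add: field_simps power2_eq_square)
  finally show ?thesis by (simp add: s_def)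
qed

lemma E_leaves_split_var_dev:
  "5 \<le> j \<Longrightarrow> E_leaves j (\<lambda>L. \<bar>split_prob j L * (1 - split_prob j L) - mean_split_var j\<bar>) \<le> 78 / sqrt (real j + 1)"
proof -
  assume j5: "5 \<le> j"
  then have j: "0 < j" by simp
  define s where "s = sqrt (real j + 1)"
  have s: "0 < s" "s^2 = real j + 1" by (simp_all add: s_def)
  \<comment> \<open>\<open>12 / 49\<close> is \<open>q (1 - q)\<close> at the equilibrium \<open>q = 3 / 7\<close> of the split probability\<close>
  define D where "D = (\<lambda>L. \<bar>split_prob j L * (1 - split_prob j L) - 12 / 49\<bar>)"
  have pw: "D L \<le> 6 / real (Suc j) * \<bar>centred j L\<bar>" if L: "L \<in> set_pmf (leaves_pmf j)" for L
  proof -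
    have q: "0 \<le> split_prob j L" "split_prob j L \<le> 1" using split_prob_01[OF L] by auto
    have "split_prob j L * (1 - split_prob j L) - 12 / 49 = - ((split_prob j L - 3/7) * (split_prob j L - 4/7))" by (simp add: field_simps)
    then have "D L = \<bar>split_prob j L - 3/7\<bar> * \<bar>split_prob j L - 4/7\<bar>" by (simp add: D_def abs_mult)
    also have "\<dots> \<le> \<bar>split_prob j L - 3/7\<bar> * 1" using q by (intro mult_left_mono) auto
    also have "\<bar>split_prob j L - 3/7\<bar> = 6 / real (Suc j) * \<bar>centred j L\<bar>" unfolding split_prob_centred[OF j L] by (simp add: abs_mult)
    finally show ?thesis by simp
  qed
  have ED: "E_leaves j D \<le> 39 / s"
  proof -
    have "E_leaves j D \<le> E_leaves j (\<lambda>L. 6 / real (Suc j) * \<bar>centred j L\<bar>)" using pw by (intro E_leaves_mono)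
    also have "\<dots> = 6 / real (Suc j) * E_leaves j (\<lambda>L. \<bar>centred j L\<bar>)" by (rule E_leaves_mult)
    also have "\<dots> \<le> 6 / real (Suc j) * (13 / 2 * s)" using E_leaves_abs_centred_le[of j] by (intro mult_left_mono) (auto simp: s_def)
    also have "\<dots> = 39 / s" using s by (simp add: field_simps power2_eq_square)
    finally show ?thesis .
  qed
  have Qc: "\<bar>mean_split_var j - 12 / 49\<bar> \<le> E_leaves j D"
  proof -
    have "mean_split_var j - 12/49 = E_leaves j (\<lambda>L. split_prob j L * (1 - split_prob j L) - 12 / 49)" by (simp add: E_leaves_diff E_leaves_const mean_split_var_def)
    then have "\<bar>mean_split_var j - 12/49\<bar> = norm (E_leaves j (\<lambda>L. split_prob j L * (1 - split_prob j L) - 12 / 49))" by simp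
    also have "\<dots> \<le> E_leaves j D" using norm_E_leaves_le[of j "\<lambda>L. split_prob j L * (1 - split_prob j L) - 12/49"]
      unfolding D_def real_norm_def by simp
    finally show ?thesis .
  qed
  have "E_leaves j (\<lambda>L. \<bar>split_prob j L * (1 - split_prob j L) - mean_split_var j\<bar>) \<le> E_leaves j (\<lambda>L. D L + \<bar>mean_split_var j - 12/49\<bar>)"
    by (intro E_leaves_mono) (simp add: D_def)
  also have "\<dots> = E_leaves j D + \<bar>mean_split_var j - 12/49\<bar>" by (simp add: E_leaves_add E_leaves_const)
  also have "\<dots> \<le> 78 / s" using ED Qc by simp
  finally show ?thesis by (simp add: s_def)
qed

lemma norm_hybrid_char_step_le:
  fixes t :: real
  assumes j: "0 < j" "j < n"
  defines "\<theta> \<equiv> t * damping n (Suc j) / sqrt (sigma2 n)"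
  shows "cmod (hybrid_char n t (Suc j) - hybrid_char n t j) \<le>
    \<bar>\<theta>\<bar>^3 / 6 + \<theta>^2 / 2 * E_leaves j (\<lambda>L. \<bar>split_prob j L * (1 - split_prob j L) - mean_split_var j\<bar>) + \<theta>^4 / 8"
proof -
  let ?d = "\<lambda>L. centred_bernoulli_char (split_prob j L) \<theta> - complex_of_real (exp (- (\<theta>^2 * mean_split_var j / 2)))"
  have "cmod (complex_of_real (exp (- (t^2 * residual_var n (Suc j) / 2)))) \<le> 1"
    using residual_var_nonneg[of "Suc j" n] j by simp
  then have "cmod (hybrid_char n t (Suc j) - hybrid_char n t j) \<le>
      cmod (E_leaves j (\<lambda>L. iexp (t * damping n j / sqrt (sigma2 n) * centred j L) * ?d L))"
    unfolding hybrid_char_step[OF j, of t, folded \<theta>_def] norm_mult by (simp add: mult_left_le)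
  also have "\<dots> \<le> E_leaves j (\<lambda>L. cmod (iexp (t * damping n j / sqrt (sigma2 n) * centred j L) * ?d L))"
    by (rule norm_E_leaves_le)
  also have "\<dots> = E_leaves j (\<lambda>L. cmod (?d L))"
    by (simp add: norm_mult norm_exp_i_times)
  also have "\<dots> \<le> E_leaves j (\<lambda>L. \<bar>\<theta>\<bar>^3 / 6 + \<theta>^2 / 2 * \<bar>split_prob j L * (1 - split_prob j L) - mean_split_var j\<bar> + \<theta>^4 / 8)"
    by (intro E_leaves_mono centred_bernoulli_char_approx_exp) (use split_prob_01 mean_split_var_01 in auto)
  also have "\<dots> = \<bar>\<theta>\<bar>^3 / 6 + \<theta>^2 / 2 * E_leaves j (\<lambda>L. \<bar>split_prob j L * (1 - split_prob j L) - mean_split_var j\<bar>) + \<theta>^4 / 8"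
    by (simp only: E_leaves_add E_leaves_mult E_leaves_const)
  finally show ?thesis .
qed

lemma hybrid_char_step_bound:
  fixes t :: real
  assumes j: "5 \<le> j" "j < n"
  defines "\<tau> \<equiv> \<bar>t\<bar> / sqrt (sigma2 n)"
  shows "cmod (hybrid_char n t (Suc j) - hybrid_char n t j) \<le> \<tau>^3 / 6 + 39 * \<tau>^2 / sqrt (real j + 1) + \<tau>^4 / 8"
proof -
  define \<theta> where "\<theta> = t * damping n (Suc j) / sqrt (sigma2 n)"
  have "\<bar>\<theta>\<bar> \<le> \<tau>"
  proof -
    have d: "0 \<le> damping n (Suc j)" "damping n (Suc j) \<le> 1" using damping_01[of "Suc j" n] j by auto
    have "\<bar>\<theta>\<bar> = \<bar>t\<bar> * damping n (Suc j) / sqrt (sigma2 n)"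
      using d sigma2_pos[of n] by (simp add: \<theta>_def abs_mult)
    also have "\<dots> \<le> \<bar>t\<bar> * 1 / sqrt (sigma2 n)"
      using d sigma2_pos[of n] by (intro divide_right_mono mult_left_mono) auto
    finally show ?thesis by (simp add: \<tau>_def)
  qed
  then have "\<bar>\<theta>\<bar>^k \<le> \<tau>^k" for k
    by (intro power_mono) auto
  from this[of 2] this[of 3] this[of 4] have "\<theta>^2 \<le> \<tau>^2" "\<bar>\<theta>\<bar>^3 \<le> \<tau>^3" "\<theta>^4 \<le> \<tau>^4"
    by (simp_all add: power_even_abs)
  moreover have "0 \<le> E_leaves j (\<lambda>L. \<bar>split_prob j L * (1 - split_prob j L) - mean_split_var j\<bar>)"
    using E_leaves_mono[of j "\<lambda>_. 0"] by (simp add: E_leaves_const)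
  ultimately have "\<theta>^2 / 2 * E_leaves j (\<lambda>L. \<bar>split_prob j L * (1 - split_prob j L) - mean_split_var j\<bar>) \<le>
      \<tau>^2 / 2 * (78 / sqrt (real j + 1))"
    using E_leaves_split_var_dev[OF j(1)] by (intro mult_mono) auto
  then show ?thesis
    using norm_hybrid_char_step_le[of j n t] j \<open>\<bar>\<theta>\<bar>^3 \<le> \<tau>^3\<close> \<open>\<theta>^4 \<le> \<tau>^4\<close> by (simp add: \<theta>_def)
qed

lemma hybrid_char_diff_bound:
  assumes n: "12 \<le> n"
  shows "cmod (hybrid_char n t n - hybrid_char n t 5) \<le> clt_error n t"
proof -
  define \<tau> where "\<tau> = \<bar>t\<bar> / sqrt (sigma2 n)"
  have "hybrid_char n t n - hybrid_char n t 5 = (\<Sum>j = 5..<n. hybrid_char n t (Suc j) - hybrid_char n t j)"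
    using n by (simp add: sum_Suc_diff')
  then have "cmod (hybrid_char n t n - hybrid_char n t 5) \<le> (\<Sum>j = 5..<n. cmod (hybrid_char n t (Suc j) - hybrid_char n t j))"
    by (simp add: norm_sum)
  also have "\<dots> \<le> (\<Sum>j = 5..<n. \<tau>^3 / 6 + 39 * \<tau>^2 / sqrt (real j + 1) + \<tau>^4 / 8)"
    by (intro sum_mono) (auto simp: \<tau>_def intro!: hybrid_char_step_bound)
  also have "\<dots> = real (n - 5) * (\<tau>^3 / 6) + 39 * \<tau>^2 * (\<Sum>j = 5..<n. 1 / sqrt (real j + 1)) + real (n - 5) * (\<tau>^4 / 8)"
    by (simp add: sum.distrib sum_distrib_left)
  also have "\<dots> \<le> real n * (\<tau>^3 / 6) + 39 * \<tau>^2 * (2 * sqrt (real n)) + real n * (\<tau>^4 / 8)"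
  proof -
    have "(\<Sum>j = 5..<n. 1 / sqrt (real j + 1)) \<le> (\<Sum>j<n. 1 / sqrt (real j + 1))"
      by (intro sum_mono2) auto
    also have "\<dots> \<le> 2 * sqrt (real n)" by (rule sum_inverse_sqrt_le)
    finally show ?thesis using sigma2_pos[of n]
      by (intro add_mono mult_right_mono mult_left_mono) (auto simp: \<tau>_def)
  qed
  also have "\<dots> = clt_error n t" by (simp add: clt_error_def Let_def \<tau>_def mult_ac)
  finally show ?thesis .
qed

lemma hybrid_char_self:
  "hybrid_char n t n = E_leaves n (\<lambda>L. iexp (t / sqrt (sigma2 n) * centred n L))"
  by (simp add: hybrid_char_def damping_self residual_var_self)

lemma hybrid_char_5: "12 \<le> n \<Longrightarrow> hybrid_char n t 5 = complex_of_real (exp (- (t^2 / 2)))"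
  by (simp add: hybrid_char_def damping_5 residual_var_5 E_leaves_const)

lemma char_standardized_L_dist:
  assumes n: "12 \<le> n"
  shows "char (distr (measure_pmf (L_dist n)) borel
                  (\<lambda>x. (x - measure_pmf.expectation (L_dist n) (\<lambda>y. y))
                       / sqrt (measure_pmf.variance (L_dist n) (\<lambda>y. y)))) t = hybrid_char n t n"
proof -
  have m: "measure_pmf.expectation (L_dist n) (\<lambda>x. x) = 3 / 7 * (real n + 1)"
    and v: "measure_pmf.variance (L_dist n) (\<lambda>x. x) = sigma2 n"
    using L_dist_moments[of n] n by (simp_all add: sigma2_def)
  have "char (distr (measure_pmf (L_dist n)) borel (\<lambda>x. (x - 3 / 7 * (real n + 1)) / sqrt (sigma2 n))) t =
        (\<integral>x. iexp (t * ((x - 3 / 7 * (real n + 1)) / sqrt (sigma2 n))) \<partial>measure_pmf (L_dist n))"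
    unfolding char_def by (subst integral_distr) auto
  also have "\<dots> = E_leaves n (\<lambda>L. iexp (t * ((real L - 3 / 7 * (real n + 1)) / sqrt (sigma2 n))))"
    unfolding L_dist_eq_leaves_pmf integral_map_pmf by (rule integral_leaves_pmf)
  also have "\<dots> = hybrid_char n t n"
    unfolding hybrid_char_self by (simp add: centred_def field_simps)
  finally show ?thesis unfolding v unfolding m .
qed

lemma L_dist_clt:
  "weak_conv_m
     (\<lambda>n. distr (measure_pmf (L_dist n)) borel
            (\<lambda>x. (x - measure_pmf.expectation (L_dist n) (\<lambda>y. y)) / sqrt (measure_pmf.variance (L_dist n) (\<lambda>y. y))))
     std_normal_distribution"
proof (rule levy_continuity)
  fix n
  show "real_distribution (distr (measure_pmf (L_dist n)) borel
      (\<lambda>x. (x - measure_pmf.expectation (L_dist n) (\<lambda>y. y)) / sqrt (measure_pmf.variance (L_dist n) (\<lambda>y. y))))"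
    by (intro prob_space.real_distribution_distr prob_space_measure_pmf) simp
next
  fix t :: real
  let ?c = "\<lambda>n. char (distr (measure_pmf (L_dist n)) borel
      (\<lambda>x. (x - measure_pmf.expectation (L_dist n) (\<lambda>y. y)) / sqrt (measure_pmf.variance (L_dist n) (\<lambda>y. y)))) t"
  have "eventually (\<lambda>n. norm (?c n - complex_of_real (exp (- (t^2 / 2)))) \<le> clt_error n t) sequentially"
    using hybrid_char_diff_bound char_standardized_L_dist hybrid_char_5
    by (intro eventually_sequentiallyI[of 12]) simp
  then have "(\<lambda>n. ?c n - complex_of_real (exp (- (t^2 / 2)))) \<longlonglongrightarrow> 0"
    using clt_error_tendsto_0 by (rule Lim_null_comparison)
  then show "?c \<longlonglongrightarrow> char std_normal_distribution t"
    by (simp add: LIM_zero_iff char_std_normal_distribution)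
qed (rule real_dist_normal_dist)
theorem theorem5p1:
  shows "(\<forall>n::nat. n > 11 \<longrightarrow>
            measure_pmf.expectation (L_dist n) (\<lambda>x. x) = 3 / 7 * (real n + 1) \<and>
            measure_pmf.variance (L_dist n) (\<lambda>x. x) = 12 / 637 * (real n + 1))
       \<and> weak_conv_m
           (\<lambda>n. distr (measure_pmf (L_dist n)) borel
                  (\<lambda>x. (x - measure_pmf.expectation (L_dist n) (\<lambda>y. y))
                       / sqrt (measure_pmf.variance (L_dist n) (\<lambda>y. y))))
           std_normal_distribution"
  using L_dist_moments L_dist_clt by blast

end
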